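(* Let $d\ge2$, $L\ge2$, $\sigma>0$, $\lambda>0$, $\gamma>0$, let $\mu_0^\star,\mu_1^\star\in\mathbb{S}^{d-1}$ be orthonormal, and let the rows of $\mathbb{X}$ be i.i.d. with law $\frac12\mathcal{N}(\mu_0^\star,\sigma^2I_d)+\frac12\mathcal{N}(\mu_1^\star,\sigma^2I_d)$. If the projected gradient descent iteration is initialized at $(\mu_0^0,\mu_1^0)\in\mathcal{M}$, then $\kappa_0^k=\langle\mu_0^k,\mu_0^\star\rangle$, $\kappa_1^k=\langle\mu_1^k,\mu_1^\star\rangle$ satisfy $(\kappa_0^{k+1},\kappa_1^{k+1})=\varphi(\kappa_0^k,\kappa_1^k)$ for all $k$, where $\varphi:[-1,1]^2\to[-1,1]^2$ is $$\varphi(\kappa_0,\kappa_1)=\left(\frac{\kappa_0-\gamma\,\partial_{\kappa_0}\mathcal{R}^<(\kappa_0,\kappa_1)(1-\kappa_0^2)}{\sqrt{1+\gamma^2(\partial_{\kappa_0}\mathcal{R}^<(\kappa_0,\kappa_1))^2(1-\kappa_0^2)}},\ \frac{\kappa_1-\gamma\,\partial_{\kappa_1}\mathcal{R}^<(\kappa_0,\kappa_1)(1-\kappa_1^2)}{\sqrt{1+\gamma^2(\partial_{\kappa_1}\mathcal{R}^<(\kappa_0,\kappa_1))^2(1-\kappa_1^2)}}\right),$$ and $\mathcal{R}^<(\kappa_0,\kappa_1)=A(\kappa_0^4+\kappa_1^4)+B(\kappa_0^2+\kappa_1^2)+C\kappa_0^2\kappa_1^2+D$.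
   Context: $T^{\mathrm{lin},\mu_0,\mu_1}(\mathbb{X})_\ell=\frac{2}{L}\sum_{k=1}^L\lambda X_\ell^\top(\mu_0\mu_0^\top+\mu_1\mu_1^\top)X_kX_k$; $\mathcal{R}(\mu_0,\mu_1)=\frac1L\sum_\ell\mathbb{E}\|X_\ell-T^{\mathrm{lin},\mu_0,\mu_1}(\mathbb{X})_\ell\|_2^2$. Iteration: for $i\in\{0,1\}$, $\mu_i^{k+1}=\dfrac{\mu_i^k-\gamma(I_d-\mu_i^k(\mu_i^k)^\top)\nabla_{\mu_i}\mathcal{R}(\mu_0^k,\mu_1^k)}{\|\mu_i^k-\gamma(I_d-\mu_i^k(\mu_i^k)^\top)\nabla_{\mu_i}\mathcal{R}(\mu_0^k,\mu_1^k)\|_2}$. $\mathcal{M}=\{(\mu_0,\mu_1)\in(\mathbb{S}^{d-1})^2:\langle\mu_1^\star,\mu_0\rangle=\langle\mu_0^\star,\mu_1\rangle=\langle\mu_0,\mu_1\rangle=0\}$. With $c_1(n)=1+n\sigma^2$, $c_2(n)=1+\sigma^2(d+n)$: $A=\frac{2\lambda^2}{L^2}c_2(8)+\frac{2\lambda^2(L-1)}{L^2}c_1(5)+\frac{\lambda^2(L-1)}{L^2}c_2(4)+\frac{\lambda^2(L-1)(L-2)}{2L^2}c_1(4)$, $B=-\frac{2\lambda}{L}c_2(4)+\frac{16\lambda^2\sigma^2}{L^2}c_2(6)+\frac{8\lambda^2\sigma^2(L-1)}{L^2}c_1(6)-\frac{\lambda(L-1)}{L}c_1(4)+\frac{4\lambda^2\sigma^2(L-1)}{L^2}c_2(3)+\frac{\lambda^2\sigma^2(L-1)(L-2)}{L^2}c_1(6)$,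 $C=\frac{4\lambda^2\sigma^2(L-1)}{L^2}$, $D=c_1(d)-\frac{8\lambda\sigma^2}{L}c_2(2)+\frac{32\lambda^2\sigma^4}{L^2}c_2(4)+\frac{64\lambda^2\sigma^6(L-1)}{L^2}-\frac{8\lambda\sigma^4(L-1)}{L}+\frac{8\lambda^2\sigma^4(L-1)}{L^2}c_2(2)+\frac{8\lambda^2\sigma^6(L-1)(L-2)}{L^2}$ (so that $\mathcal{R}(\mu_0,\mu_1)=\mathcal{R}^<(\langle\mu_0^\star,\mu_0\rangle,\langle\mu_1^\star,\mu_1\rangle)$ on $\mathcal{M}$). *)

theory Defs
  imports "HOL-Probability.Probability"
begin

definition gauss_density :: "real \<Rightarrow> real^'d \<Rightarrow> real^'d \<Rightarrow> real" where
  "gauss_density s m x = (\<Prod>j\<in>UNIV. normal_density (m $ j) s (x $ j))"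

definition mixture :: "real \<Rightarrow> real^'d \<Rightarrow> real^'d \<Rightarrow> (real^'d) measure" where
  "mixture s m0 m1 =
     density lborel (\<lambda>x. ennreal (gauss_density s m0 x / 2 + gauss_density s m1 x / 2))"

definition data_law :: "nat \<Rightarrow> real \<Rightarrow> real^'d \<Rightarrow> real^'d \<Rightarrow> (nat \<Rightarrow> real^'d) measure" where
  "data_law L s m0 m1 = PiM {..<L} (\<lambda>_. mixture s m0 m1)"

definition Tlin :: "nat \<Rightarrow> real \<Rightarrow> real^'d \<Rightarrow> real^'d \<Rightarrow> (nat \<Rightarrow> real^'d) \<Rightarrow> nat \<Rightarrow> real^'d" where
  "Tlin L lam u0 u1 X l =
     (2 / real L) *\<^sub>R (\<Sum>k<L. (lam * ((X l \<bullet> u0) * (u0 \<bullet> X k) + (X l \<bullet> u1) * (u1 \<bullet> X k))) *\<^sub>R X k)"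

definition risk :: "nat \<Rightarrow> real \<Rightarrow> real \<Rightarrow> real^'d \<Rightarrow> real^'d \<Rightarrow> real^'d \<Rightarrow> real^'d \<Rightarrow> real" where
  "risk L lam s m0 m1 u0 u1 =
     (1 / real L) * (\<Sum>l<L. integral\<^sup>L (data_law L s m0 m1) (\<lambda>X. (norm (X l - Tlin L lam u0 u1 X l))\<^sup>2))"

definition grad :: "('a::real_inner \<Rightarrow> real) \<Rightarrow> 'a \<Rightarrow> 'a" where
  "grad f x = (SOME D. GDERIV f x :> D)"

definition pgd_step :: "real \<Rightarrow> real^'d \<Rightarrow> real^'d \<Rightarrow> real^'d" where
  "pgd_step g u D = (let v = u - g *\<^sub>R (D - (u \<bullet> D) *\<^sub>R u) in v /\<^sub>R norm v)"

definition c1 :: "real \<Rightarrow> real \<Rightarrow> real" where "c1 s n = 1 + n * s\<^sup>2"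
definition c2 :: "real \<Rightarrow> real \<Rightarrow> real \<Rightarrow> real" where "c2 d s n = 1 + s\<^sup>2 * (d + n)"

definition coefA :: "real \<Rightarrow> real \<Rightarrow> real \<Rightarrow> real \<Rightarrow> real" where
  "coefA d L lam s =
     2 * lam\<^sup>2 / L\<^sup>2 * c2 d s 8 + 2 * lam\<^sup>2 * (L - 1) / L\<^sup>2 * c1 s 5
     + lam\<^sup>2 * (L - 1) / L\<^sup>2 * c2 d s 4 + lam\<^sup>2 * (L - 1) * (L - 2) / (2 * L\<^sup>2) * c1 s 4"

definition coefB :: "real \<Rightarrow> real \<Rightarrow> real \<Rightarrow> real \<Rightarrow> real" where
  "coefB d L lam s =
     - 2 * lam / L * c2 d s 4 + 16 * lam\<^sup>2 * s\<^sup>2 / L\<^sup>2 * c2 d s 6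
     + 8 * lam\<^sup>2 * s\<^sup>2 * (L - 1) / L\<^sup>2 * c1 s 6 - lam * (L - 1) / L * c1 s 4
     + 4 * lam\<^sup>2 * s\<^sup>2 * (L - 1) / L\<^sup>2 * c2 d s 3
     + lam\<^sup>2 * s\<^sup>2 * (L - 1) * (L - 2) / L\<^sup>2 * c1 s 6"

definition coefC :: "real \<Rightarrow> real \<Rightarrow> real \<Rightarrow> real \<Rightarrow> real" where
  "coefC d L lam s = 4 * lam\<^sup>2 * s\<^sup>2 * (L - 1) / L\<^sup>2"

definition coefD :: "real \<Rightarrow> real \<Rightarrow> real \<Rightarrow> real \<Rightarrow> real" where
  "coefD d L lam s =
     c1 s d - 8 * lam * s\<^sup>2 / L * c2 d s 2 + 32 * lam\<^sup>2 * s ^ 4 / L\<^sup>2 * c2 d s 4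
     + 64 * lam\<^sup>2 * s ^ 6 * (L - 1) / L\<^sup>2 - 8 * lam * s ^ 4 * (L - 1) / L
     + 8 * lam\<^sup>2 * s ^ 4 * (L - 1) / L\<^sup>2 * c2 d s 2
     + 8 * lam\<^sup>2 * s ^ 6 * (L - 1) * (L - 2) / L\<^sup>2"

definition risk_lt :: "real \<Rightarrow> real \<Rightarrow> real \<Rightarrow> real \<Rightarrow> real \<Rightarrow> real \<Rightarrow> real" where
  "risk_lt d L lam s k0 k1 =
     coefA d L lam s * (k0 ^ 4 + k1 ^ 4) + coefB d L lam s * (k0\<^sup>2 + k1\<^sup>2)
     + coefC d L lam s * k0\<^sup>2 * k1\<^sup>2 + coefD d L lam s"

definition phi :: "real \<Rightarrow> real \<Rightarrow> real \<Rightarrow> real \<Rightarrow> real \<Rightarrow> real \<times> real \<Rightarrow> real \<times> real" where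
  "phi d L lam s g = (\<lambda>(k0, k1).
     (let p0 = deriv (\<lambda>t. risk_lt d L lam s t k1) k0;
          p1 = deriv (\<lambda>t. risk_lt d L lam s k0 t) k1
      in ((k0 - g * p0 * (1 - k0\<^sup>2)) / sqrt (1 + g\<^sup>2 * p0\<^sup>2 * (1 - k0\<^sup>2)),
          (k1 - g * p1 * (1 - k1\<^sup>2)) / sqrt (1 + g\<^sup>2 * p1\<^sup>2 * (1 - k1\<^sup>2)))))"

end

(*
  The risk is the expectation of a polynomial in the Gaussian-mixture tokens, so it can be
  computed exactly.  Gaussian integration by parts (Stein's identity) gives Wick's recursion for
  the moments of products of linear forms, and independence of the rows reduces the risk to
  finitely many such moments.  For orthonormal targets m0, m1 and a unit vector u1 orthogonal to
  m0, the risk as a function of its first argument u depends only on u.u, u.m0, u.m1 and u.u1,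
  through an explicit polynomial.  Hence at a point of M its gradient is a combination of u0 and
  m0 whose m0-coefficient is the partial derivative of R^<.  A projected gradient step along such
  a direction stays in the plane of u0 and m0, keeps the pair on M, and moves the overlap exactly
  as phi prescribes.
*)

theory Submission
  imports Defs "HOL-Computational_Algebra.Polynomial"
begin

section \<open>Gaussian integration by parts\<close>

definition gaussian :: "real \<Rightarrow> real \<Rightarrow> real measure" where
  "gaussian c s = density lborel (\<lambda>x. ennreal (normal_density c s x))"

lemma sets_gaussian [simp, measurable_cong]: "sets (gaussian c s) = sets borel"
  by (simp add: gaussian_def)

lemma space_gaussian [simp]: "space (gaussian c s) = UNIV"
  by (simp add: gaussian_def)

lemma prob_space_gaussian: "s > 0 \<Longrightarrow> prob_space (gaussian c s)"
  unfolding gaussian_def by (rule prob_space_normal_density)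

lemma integral_gaussian:
  "f \<in> borel_measurable borel \<Longrightarrow>
     integral\<^sup>L (gaussian c s) f = (LBINT x. normal_density c s x * f x)"
  unfolding gaussian_def by (subst integral_density) auto

lemma integrable_gaussian_iff:
  "f \<in> borel_measurable borel \<Longrightarrow>
     integrable (gaussian c s) f \<longleftrightarrow> integrable lborel (\<lambda>x. normal_density c s x * f x)"
  unfolding gaussian_def by (subst integrable_density) auto

lemma integrable_gaussian_centered_power:
  "s > 0 \<Longrightarrow> integrable (gaussian c s) (\<lambda>x. (x - c) ^ k)"
  by (subst integrable_gaussian_iff) (auto intro: integrable_normal_moment)

lemma integrable_gaussian_centered_abs_power:
  "s > 0 \<Longrightarrow> integrable (gaussian c s) (\<lambda>x. \<bar>x - c\<bar> ^ k)"
  by (subst integrable_gaussian_iff) (auto intro: integrable_normal_moment_abs)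

lemma gaussian_centered_moment_recurrence:
  assumes s: "s > 0"
  shows "integral\<^sup>L (gaussian c s) (\<lambda>x. (x - c) ^ Suc (Suc k))
       = s\<^sup>2 * Suc k * integral\<^sup>L (gaussian c s) (\<lambda>x. (x - c) ^ k)"
proof (cases "even k")
  case True
  then obtain m where k: "k = 2 * m" by auto
  have "(fact (2 * Suc m) :: real) / ((2 / s\<^sup>2) ^ Suc m * fact (Suc m))
      = s\<^sup>2 * Suc (2 * m) * (fact (2 * m) / ((2 / s\<^sup>2) ^ m * fact m))"
    using s by (simp add: fact_Suc divide_simps)
  then show ?thesis
    using integral_normal_moment_even[OF s, of c "Suc m"] integral_normal_moment_even[OF s, of c m]
    by (simp add: k integral_gaussian)
next
  case False
  then obtain m where "k = 2 * m + 1" using oddE by blast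
  then show ?thesis
    using integral_normal_moment_odd[OF s, of c "Suc m"] integral_normal_moment_odd[OF s, of c m]
    by (simp add: integral_gaussian)
qed

lemma gaussian_centered_mean:
  "s > 0 \<Longrightarrow> integral\<^sup>L (gaussian c s) (\<lambda>x. x - c) = 0"
  using integral_normal_moment_odd[of s c 0] by (simp add: integral_gaussian)

lemma poly_eq_sum_coeff_atMost:
  fixes p :: "'a::comm_semiring_1 poly"
  assumes "degree p \<le> n"
  shows "poly p x = (\<Sum>i\<le>n. coeff p i * x ^ i)"
proof -
  have "(\<Sum>i\<le>degree p. coeff p i * x ^ i) = (\<Sum>i\<le>n. coeff p i * x ^ i)"
    by (rule sum.mono_neutral_left) (use assms in \<open>auto simp: coeff_eq_0\<close>)
  then show ?thesis by (simp add: poly_altdef)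
qed

lemma integrable_gaussian_centered_poly:
  "s > 0 \<Longrightarrow> integrable (gaussian c s) (\<lambda>x. poly p (x - c))"
  unfolding poly_altdef by (auto intro!: integrable_gaussian_centered_power)

lemma integrable_gaussian_poly:
  assumes "s > 0"
  shows "integrable (gaussian c s) (poly p)"
proof -
  have "poly p = (\<lambda>x. poly (pcompose p [:c, 1:]) (x - c))"
    by (simp add: poly_pcompose)
  then show ?thesis
    using integrable_gaussian_centered_poly[OF assms, of c "pcompose p [:c, 1:]"] by simp
qed

lemma gaussian_stein_poly:
  assumes s: "s > 0"
  shows "integral\<^sup>L (gaussian c s) (\<lambda>x. (x - c) * poly p (x - c))
       = s\<^sup>2 * integral\<^sup>L (gaussian c s) (\<lambda>x. poly (pderiv p) (x - c))"
proof -
  define n where "n = degree p"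
  define M where "M k = integral\<^sup>L (gaussian c s) (\<lambda>x. (x - c) ^ k)" for k
  have M1: "M (Suc 0) = 0"
    using gaussian_centered_mean[OF s] by (simp add: M_def)
  have M2: "M (Suc (Suc k)) = s\<^sup>2 * Suc k * M k" for k
    using gaussian_centered_moment_recurrence[OF s] by (simp add: M_def)
  have "(\<lambda>x. (x - c) * poly p (x - c)) = (\<lambda>x. \<Sum>i\<le>Suc n. coeff p i * (x - c) ^ Suc i)"
    by (subst poly_eq_sum_coeff_atMost[of p "Suc n"])
      (auto simp: n_def sum_distrib_left algebra_simps)
  then have "integral\<^sup>L (gaussian c s) (\<lambda>x. (x - c) * poly p (x - c))
      = (\<Sum>i\<le>Suc n. coeff p i * M (Suc i))"
    by (simp del: sum.atMost_Suc power_Suc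
        add: M_def integrable_gaussian_centered_power s)
  also have "\<dots> = (\<Sum>i\<le>n. coeff p (Suc i) * M (Suc (Suc i)))"
    by (subst sum.atMost_Suc_shift) (simp add: M1)
  also have "\<dots> = s\<^sup>2 * (\<Sum>i\<le>n. coeff (pderiv p) i * M i)"
    by (simp add: M2 coeff_pderiv sum_distrib_left algebra_simps)
  also have "(\<Sum>i\<le>n. coeff (pderiv p) i * M i)
      = integral\<^sup>L (gaussian c s) (\<lambda>x. poly (pderiv p) (x - c))"
    by (subst poly_eq_sum_coeff_atMost[of "pderiv p" n])
      (simp_all add: n_def degree_pderiv M_def integrable_gaussian_centered_power s)
  finally show ?thesis .
qed

lemma poly_prod_affine:
  "(\<Prod>r\<in>R. a r * x + b r) = poly (\<Prod>r\<in>R. [:b r, a r:]) x"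
  by (simp add: poly_prod algebra_simps)

lemma integrable_gaussian_prod_affine:
  "s > 0 \<Longrightarrow> integrable (gaussian c s) (\<lambda>x. \<Prod>r\<in>R. a r * x + b r)"
  unfolding poly_prod_affine by (rule integrable_gaussian_poly)

lemma integrable_gaussian_centered_mult_prod_affine:
  assumes "s > 0"
  shows "integrable (gaussian c s) (\<lambda>x. (x - c) * (\<Prod>r\<in>R. a r * x + b r))"
proof -
  have "(\<lambda>x. (x - c) * (\<Prod>r\<in>R. a r * x + b r)) = poly ([:- c, 1:] * (\<Prod>r\<in>R. [:b r, a r:]))"
    by (simp add: fun_eq_iff poly_prod algebra_simps)
  then show ?thesis using integrable_gaussian_poly[OF assms] by metis
qed

lemma gaussian_stein_prod_affine:
  assumes s: "s > 0" and R: "finite R"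
  shows "integral\<^sup>L (gaussian c s) (\<lambda>x. (x - c) * (\<Prod>r\<in>R. a r * x + b r))
       = s\<^sup>2 * (\<Sum>t\<in>R. a t * integral\<^sup>L (gaussian c s) (\<lambda>x. \<Prod>r\<in>R-{t}. a r * x + b r))"
proof -
  define f where "f r = [:a r * c + b r, a r:]" for r
  have prod_eq: "(\<Prod>r\<in>A. a r * x + b r) = poly (\<Prod>r\<in>A. f r) (x - c)" for A x
    by (simp add: poly_prod f_def algebra_simps)
  have "pderiv (\<Prod>r\<in>R. f r) = (\<Sum>t\<in>R. smult (a t) (\<Prod>r\<in>R-{t}. f r))"
    by (simp add: pderiv_prod f_def pderiv_pCons mult.commute)
  then have "integral\<^sup>L (gaussian c s) (\<lambda>x. poly (pderiv (\<Prod>r\<in>R. f r)) (x - c))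
      = (\<Sum>t\<in>R. a t * integral\<^sup>L (gaussian c s) (\<lambda>x. poly (\<Prod>r\<in>R-{t}. f r) (x - c)))"
    by (simp add: poly_sum integrable_gaussian_centered_poly s)
  then show ?thesis
    unfolding prod_eq gaussian_stein_poly[OF s] by simp
qed

lemma integrable_gaussian_one_plus_abs_power:
  assumes s: "s > 0"
  shows "integrable (gaussian c s) (\<lambda>t. (1 + \<bar>t\<bar>) ^ n)"
proof (rule Bochner_Integration.integrable_bound)
  let ?B = "\<lambda>t. \<Sum>k\<le>n. of_nat (n choose k) * \<bar>t - c\<bar> ^ k * (1 + \<bar>c\<bar>) ^ (n - k)"
  show "integrable (gaussian c s) ?B"
    by (intro Bochner_Integration.integrable_sum integrable_mult_left integrable_mult_right
        integrable_gaussian_centered_abs_power s)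
  show "AE t in gaussian c s. norm ((1 + \<bar>t\<bar>) ^ n) \<le> norm (?B t)"
  proof (intro AE_I2)
    fix t
    have "(1 + \<bar>t\<bar>) ^ n \<le> (\<bar>t - c\<bar> + (1 + \<bar>c\<bar>)) ^ n"
      by (intro power_mono) auto
    also have "\<dots> = ?B t"
      by (rule binomial_ring)
    finally show "norm ((1 + \<bar>t\<bar>) ^ n) \<le> norm (?B t)"
      by (simp add: sum_nonneg)
  qed
qed simp

definition gaussian_product :: "'i set \<Rightarrow> ('i \<Rightarrow> real) \<Rightarrow> real \<Rightarrow> ('i \<Rightarrow> real) measure" where
  "gaussian_product I c s = PiM I (\<lambda>i. gaussian (c i) s)"

lemma product_sigma_finite_gaussian: "s > 0 \<Longrightarrow> product_sigma_finite (\<lambda>i. gaussian (c i) s)"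
  unfolding product_sigma_finite_def
  using prob_space_gaussian prob_space_imp_sigma_finite by blast

lemma prob_space_gaussian_product: "s > 0 \<Longrightarrow> prob_space (gaussian_product I c s)"
  unfolding gaussian_product_def by (intro prob_space_PiM prob_space_gaussian)

lemma measurable_gaussian_product_component:
  "i \<in> I \<Longrightarrow> (\<lambda>y. y i) \<in> borel_measurable (gaussian_product I c s)"
  unfolding gaussian_product_def
  using measurable_component_singleton[of i I "\<lambda>i. gaussian (c i) s"]
  by (simp cong: measurable_cong_sets)

inductive coord_poly :: "'i set \<Rightarrow> (('i \<Rightarrow> real) \<Rightarrow> real) \<Rightarrow> bool" for I where
  coord_poly_const: "coord_poly I (\<lambda>y. a)"
| coord_poly_coord: "i \<in> I \<Longrightarrow> coord_poly I (\<lambda>y. y i)"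
| coord_poly_add: "coord_poly I f \<Longrightarrow> coord_poly I g \<Longrightarrow> coord_poly I (\<lambda>y. f y + g y)"
| coord_poly_mult: "coord_poly I f \<Longrightarrow> coord_poly I g \<Longrightarrow> coord_poly I (\<lambda>y. f y * g y)"

lemma coord_poly_diff: "coord_poly I f \<Longrightarrow> coord_poly I g \<Longrightarrow> coord_poly I (\<lambda>y. f y - g y)"
  using coord_poly_add[of I f "\<lambda>y. (-1) * g y"] coord_poly_mult coord_poly_const by fastforce

lemma coord_poly_sum:
  "finite A \<Longrightarrow> (\<And>a. a \<in> A \<Longrightarrow> coord_poly I (f a)) \<Longrightarrow> coord_poly I (\<lambda>y. \<Sum>a\<in>A. f a y)"
  by (induction A rule: finite_induct) (auto intro: coord_poly_const coord_poly_add)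

lemma coord_poly_prod:
  "finite A \<Longrightarrow> (\<And>a. a \<in> A \<Longrightarrow> coord_poly I (f a)) \<Longrightarrow> coord_poly I (\<lambda>y. \<Prod>a\<in>A. f a y)"
  by (induction A rule: finite_induct) (auto intro: coord_poly_const coord_poly_mult)

lemma coord_poly_measurable: "coord_poly I f \<Longrightarrow> f \<in> borel_measurable (gaussian_product I c s)"
  by (induction rule: coord_poly.induct) (auto intro: measurable_gaussian_product_component)

lemma coord_poly_growth:
  fixes f :: "('i \<Rightarrow> real) \<Rightarrow> real"
  assumes "coord_poly I f" and I: "finite I"
  shows "\<exists>C n. 0 \<le> C \<and> (\<forall>y. \<bar>f y\<bar> \<le> C * (\<Prod>j\<in>I. 1 + \<bar>y j\<bar>) ^ n)"
  using assms(1)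
proof induction
  case (coord_poly_const a)
  show ?case by (intro exI[of _ "\<bar>a\<bar>"] exI[of _ 0]) simp
next
  case (coord_poly_coord i)
  have "\<bar>y i\<bar> \<le> (\<Prod>j\<in>I. 1 + \<bar>y j\<bar>)" for y :: "'i \<Rightarrow> real"
  proof -
    have "\<bar>y i\<bar> \<le> (1 + \<bar>y i\<bar>) * (\<Prod>j\<in>I-{i}. 1 + \<bar>y j\<bar>)"
      using prod_ge_1[of "I-{i}" "\<lambda>j. 1 + \<bar>y j\<bar>"]
      by (smt (verit) mult_cancel_left1 mult_left_mono)
    then show ?thesis using I coord_poly_coord by (simp add: prod.remove)
  qed
  then show ?case by (intro exI[of _ 1] exI[of _ 1]) simp
next
  case (coord_poly_add f g)
  then obtain C1 n1 C2 n2 where C: "0 \<le> C1" "0 \<le> C2"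
    and f: "\<And>y. \<bar>f y\<bar> \<le> C1 * (\<Prod>j\<in>I. 1 + \<bar>y j\<bar>) ^ n1"
    and g: "\<And>y. \<bar>g y\<bar> \<le> C2 * (\<Prod>j\<in>I. 1 + \<bar>y j\<bar>) ^ n2" by blast
  have "\<bar>f y + g y\<bar> \<le> (C1 + C2) * (\<Prod>j\<in>I. 1 + \<bar>y j\<bar>) ^ (n1 + n2)" for y
  proof -
    define W where "W = (\<Prod>j\<in>I. 1 + \<bar>y j\<bar>)"
    have "1 \<le> W" unfolding W_def by (rule prod_ge_1) auto
    then have "W ^ n1 \<le> W ^ (n1 + n2)" "W ^ n2 \<le> W ^ (n1 + n2)"
      by (auto intro: power_increasing)
    then have "C1 * W ^ n1 + C2 * W ^ n2 \<le> (C1 + C2) * W ^ (n1 + n2)"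
      using C by (simp add: distrib_right add_mono mult_left_mono)
    then show ?thesis using f[of y] g[of y] unfolding W_def by linarith
  qed
  then show ?case using C by (intro exI[of _ "C1 + C2"] exI[of _ "n1 + n2"]) simp
next
  case (coord_poly_mult f g)
  then obtain C1 n1 C2 n2 where C: "0 \<le> C1" "0 \<le> C2"
    and f: "\<And>y. \<bar>f y\<bar> \<le> C1 * (\<Prod>j\<in>I. 1 + \<bar>y j\<bar>) ^ n1"
    and g: "\<And>y. \<bar>g y\<bar> \<le> C2 * (\<Prod>j\<in>I. 1 + \<bar>y j\<bar>) ^ n2" by blast
  have "\<bar>f y * g y\<bar> \<le> (C1 * C2) * (\<Prod>j\<in>I. 1 + \<bar>y j\<bar>) ^ (n1 + n2)" for y
  proof -
    have "0 \<le> (\<Prod>j\<in>I. 1 + \<bar>y j\<bar>) ^ n1" by (intro zero_le_power prod_nonneg) auto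
    then show ?thesis
      using mult_mono[OF f[of y] g[of y]] C by (simp add: abs_mult power_add algebra_simps)
  qed
  then show ?case using C by (intro exI[of _ "C1 * C2"] exI[of _ "n1 + n2"]) simp
qed

lemma integrable_gaussian_product_coord_poly:
  assumes f: "coord_poly I f" and I: "finite I" and s: "s > 0"
  shows "integrable (gaussian_product I c s) f"
proof -
  obtain C n where bound: "\<And>y. \<bar>f y\<bar> \<le> C * (\<Prod>j\<in>I. (1 + \<bar>y j\<bar>) ^ n)"
    using coord_poly_growth[OF f I] by (auto simp: prod_power_distrib)
  interpret product_sigma_finite "\<lambda>i. gaussian (c i) s"
    using product_sigma_finite_gaussian[OF s] .
  have "integrable (gaussian_product I c s) (\<lambda>y. C * (\<Prod>j\<in>I. (1 + \<bar>y j\<bar>) ^ n))"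
    unfolding gaussian_product_def
    by (intro integrable_mult_right product_integrable_prod I integrable_gaussian_one_plus_abs_power s)
  then show ?thesis
  proof (rule Bochner_Integration.integrable_bound)
    show "AE y in gaussian_product I c s. norm (f y) \<le> norm (C * (\<Prod>j\<in>I. (1 + \<bar>y j\<bar>) ^ n))"
      using bound by (intro AE_I2) (metis abs_ge_self order_trans real_norm_def)
  qed (rule coord_poly_measurable[OF f])
qed

text \<open>By Fubini: with the other coordinates fixed, each linear form is affine in coordinate \<open>j\<close>,
  so the univariate identity applies.\<close>

lemma gaussian_product_stein:
  fixes w :: "'r \<Rightarrow> 'i \<Rightarrow> real"
  assumes I: "finite I" and j: "j \<in> I" and R: "finite R" and s: "s > 0"
  shows "integral\<^sup>L (gaussian_product I c s) (\<lambda>y. (y j - c j) * (\<Prod>r\<in>R. \<Sum>i\<in>I. w r i * y i))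
       = s\<^sup>2 * (\<Sum>t\<in>R. w t j *
           integral\<^sup>L (gaussian_product I c s) (\<lambda>y. \<Prod>r\<in>R-{t}. \<Sum>i\<in>I. w r i * y i))"
proof -
  let ?G = "gaussian_product I c s"
  define F where "F A y = (\<Prod>r\<in>A. \<Sum>i\<in>I. w r i * y i)" for A y
  define H where "H y = (y j - c j) * F R y - s\<^sup>2 * (\<Sum>t\<in>R. w t j * F (R - {t}) y)" for y
  have poly_F: "coord_poly I (F A)" if "finite A" for A
    unfolding F_def using that I
    by (intro coord_poly_prod coord_poly_sum coord_poly_mult coord_poly_const coord_poly_coord) auto
  have int_F: "integrable ?G (F A)" if "finite A" for A
    using poly_F[OF that] I s by (rule integrable_gaussian_product_coord_poly)
  have int_jF: "integrable ?G (\<lambda>y. (y j - c j) * F R y)"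
    using I s by (intro integrable_gaussian_product_coord_poly coord_poly_mult coord_poly_diff
        coord_poly_coord coord_poly_const poly_F R j)
  have int_sum: "integrable ?G (\<lambda>y. \<Sum>t\<in>R. w t j * F (R - {t}) y)"
    using R by (intro Bochner_Integration.integrable_sum integrable_mult_right int_F) auto
  define J where "J = I - {j}"
  have IJ: "I = insert j J" and jJ: "j \<notin> J" and J: "finite J"
    using j I by (auto simp: J_def)
  interpret product_sigma_finite "\<lambda>i. gaussian (c i) s"
    using product_sigma_finite_gaussian[OF s] .
  have inner: "integral\<^sup>L (gaussian (c j) s) (\<lambda>t. H (x(j := t))) = 0" for x
  proof -
    define b where "b r = (\<Sum>i\<in>J. w r i * x i)" for r
    have "(\<Sum>i\<in>J. w r i * (x(j := t)) i) = b r" for r t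
      unfolding b_def using jJ by (intro sum.cong) auto
    then have F_upd: "F A (x(j := t)) = (\<Prod>r\<in>A. w r j * t + b r)" for A t
      unfolding F_def IJ using jJ J by simp
    show ?thesis
      unfolding H_def F_upd
      using R s by (simp add: Bochner_Integration.integral_sum gaussian_stein_prod_affine
          integrable_gaussian_centered_mult_prod_affine integrable_gaussian_prod_affine)
  qed
  have "integral\<^sup>L ?G H
      = (\<integral>x. (\<integral>t. H (x(j := t)) \<partial>gaussian (c j) s) \<partial>PiM J (\<lambda>i. gaussian (c i) s))"
    using int_jF int_sum unfolding gaussian_product_def IJ H_def
    by (intro product_integral_insert[OF J jJ]) (auto simp: gaussian_product_def IJ)
  also have "\<dots> = 0" by (simp add: inner)
  finally have "integral\<^sup>L ?G H = 0" .
  then show ?thesis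
    using int_jF int_sum int_F R unfolding H_def F_def[symmetric]
    by (simp add: Bochner_Integration.integral_sum)
qed

definition gaussian_vec :: "real \<Rightarrow> real^'d \<Rightarrow> (real^'d) measure" where
  "gaussian_vec s c = density lborel (\<lambda>x. ennreal (gauss_density s c x))"

definition vec_of_coords :: "(real^'d \<Rightarrow> real) \<Rightarrow> real^'d" where
  "vec_of_coords y = (\<Sum>b\<in>Basis. y b *\<^sub>R b)"

lemma gauss_density_Basis:
  "gauss_density s c x = (\<Prod>b\<in>(Basis :: (real^'d) set). normal_density (c \<bullet> b) s (x \<bullet> b))"
proof -
  have Basis: "(Basis :: (real^'d) set) = range (\<lambda>i. axis i 1)"
    by (auto simp: Basis_vec_def)
  have "inj (\<lambda>i::'d. axis i (1::real))"
    by (auto simp: inj_on_def axis_eq_axis)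
  then show ?thesis
    unfolding gauss_density_def Basis by (subst prod.reindex) (simp_all add: inner_axis)
qed

lemma gauss_density_nonneg: "0 \<le> gauss_density s c x"
  by (simp add: gauss_density_def prod_nonneg)

lemma borel_measurable_gauss_density [measurable]:
  "(\<lambda>x. gauss_density s c x) \<in> borel_measurable borel"
  unfolding gauss_density_def by measurable

lemma inner_vec_of_coords_Basis: "b \<in> Basis \<Longrightarrow> vec_of_coords y \<bullet> b = y b"
  unfolding vec_of_coords_def by (simp add: inner_sum_left inner_Basis if_distrib cong: if_cong)

lemma inner_vec_of_coords: "v \<bullet> vec_of_coords y = (\<Sum>b\<in>Basis. (v \<bullet> b) * y b)"
  unfolding vec_of_coords_def by (simp add: inner_sum_right mult.commute)

lemma measurable_vec_of_coords:
  "vec_of_coords \<in> borel_measurable (gaussian_product (Basis::(real^'d) set) c s)"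
  unfolding vec_of_coords_def
  by (intro borel_measurable_sum borel_measurable_scaleR measurable_gaussian_product_component
      borel_measurable_const) auto

lemma density_PiM_lborel_prod:
  fixes f :: "'i \<Rightarrow> real \<Rightarrow> ennreal"
  assumes I: "finite I" and f: "\<And>i. f i \<in> borel_measurable borel"
    and sigma_finite: "product_sigma_finite (\<lambda>i. density lborel (f i))"
  shows "density (PiM I (\<lambda>_. lborel)) (\<lambda>y. \<Prod>i\<in>I. f i (y i)) = PiM I (\<lambda>i. density lborel (f i))"
proof -
  interpret product_sigma_finite "\<lambda>i. density lborel (f i)" by (rule sigma_finite)
  interpret lborel: product_sigma_finite "\<lambda>_::'i. lborel"
    by (simp add: product_sigma_finite_def sigma_finite_lborel)
  show ?thesis
  proof (rule PiM_eqI[OF I])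
    show "sets (density (PiM I (\<lambda>_. lborel)) (\<lambda>y. \<Prod>i\<in>I. f i (y i)))
        = sets (PiM I (\<lambda>i. density lborel (f i)))"
      by (simp cong: sets_PiM_cong)
    have dens_meas: "(\<lambda>y. \<Prod>i\<in>I. f i (y i)) \<in> borel_measurable (PiM I (\<lambda>_. lborel))"
      using f by (intro borel_measurable_prod_ennreal)
        (auto intro: measurable_compose[OF measurable_component_singleton])
    fix A assume A: "\<And>i. i \<in> I \<Longrightarrow> A i \<in> sets (density lborel (f i))"
    have indicator_PiE: "indicator (PiE I A) y = (\<Prod>i\<in>I. indicator (A i) (y i) :: ennreal)"
      if "y \<in> extensional I" for y
      using that I by (auto simp: PiE_iff indicator_def extensional_def intro: prod_zero)
    have "emeasure (density (PiM I (\<lambda>_. lborel)) (\<lambda>y. \<Prod>i\<in>I. f i (y i))) (PiE I A)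
        = (\<integral>\<^sup>+y. (\<Prod>i\<in>I. f i (y i) * indicator (A i) (y i)) \<partial>PiM I (\<lambda>_. lborel))"
      using A dens_meas by (subst emeasure_density)
        (auto intro!: nn_integral_cong sets_PiM_I_finite simp: I space_PiM PiE_iff prod.distrib
          indicator_PiE)
    also have "\<dots> = (\<Prod>i\<in>I. \<integral>\<^sup>+t. f i t * indicator (A i) t \<partial>lborel)"
      using A f by (intro lborel.product_nn_integral_prod I) auto
    also have "\<dots> = (\<Prod>i\<in>I. emeasure (density lborel (f i)) (A i))"
      using A f by (intro prod.cong refl) (simp add: emeasure_density)
    finally show "emeasure (density (PiM I (\<lambda>_. lborel)) (\<lambda>y. \<Prod>i\<in>I. f i (y i))) (PiE I A)
        = (\<Prod>i\<in>I. emeasure (density lborel (f i)) (A i))" .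
  qed
qed

lemma gaussian_vec_eq_distr:
  assumes s: "s > 0"
  shows "gaussian_vec s (c::real^'d) = distr (gaussian_product Basis (\<lambda>b. c \<bullet> b) s) borel vec_of_coords"
proof -
  let ?L = "PiM (Basis::(real^'d) set) (\<lambda>_. lborel)"
  have vec_meas: "vec_of_coords \<in> measurable ?L borel"
    unfolding vec_of_coords_def by measurable
  have "gaussian_vec s c = density (distr ?L borel vec_of_coords) (\<lambda>x. ennreal (gauss_density s c x))"
    unfolding gaussian_vec_def vec_of_coords_def by (subst lborel_eq) simp
  also have "\<dots> = distr (density ?L (\<lambda>y. ennreal (gauss_density s c (vec_of_coords y)))) borel vec_of_coords"
    by (rule density_distr) (simp_all add: vec_meas)
  also have "density ?L (\<lambda>y. ennreal (gauss_density s c (vec_of_coords y)))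
      = density ?L (\<lambda>y. \<Prod>b\<in>Basis. ennreal (normal_density (c \<bullet> b) s (y b)))"
    by (intro density_cong)
      (auto simp: gauss_density_Basis inner_vec_of_coords_Basis prod_ennreal)
  also have "\<dots> = gaussian_product Basis (\<lambda>b. c \<bullet> b) s"
    unfolding gaussian_product_def gaussian_def
    using product_sigma_finite_gaussian[OF s, of "\<lambda>b. c \<bullet> b"]
    by (intro density_PiM_lborel_prod) (auto simp: gaussian_def)
  finally show ?thesis .
qed

lemma prob_space_gaussian_vec: "s > 0 \<Longrightarrow> prob_space (gaussian_vec s c)"
  unfolding gaussian_vec_eq_distr
  by (intro prob_space.prob_space_distr prob_space_gaussian_product measurable_vec_of_coords)

lemma integral_gaussian_vec:
  fixes f :: "real^'d \<Rightarrow> real"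
  assumes s: "s > 0" and f: "f \<in> borel_measurable borel"
  shows "integral\<^sup>L (gaussian_vec s c) f
       = integral\<^sup>L (gaussian_product Basis (\<lambda>b. c \<bullet> b) s) (\<lambda>y. f (vec_of_coords y))"
  unfolding gaussian_vec_eq_distr[OF s] using measurable_vec_of_coords f by (rule integral_distr)

lemma integrable_gaussian_vec_iff:
  fixes f :: "real^'d \<Rightarrow> real"
  assumes s: "s > 0" and f: "f \<in> borel_measurable borel"
  shows "integrable (gaussian_vec s c) f
     \<longleftrightarrow> integrable (gaussian_product Basis (\<lambda>b. c \<bullet> b) s) (\<lambda>y. f (vec_of_coords y))"
  unfolding gaussian_vec_eq_distr[OF s] using measurable_vec_of_coords f by (rule integrable_distr_eq)

inductive vec_poly :: "(real^'d \<Rightarrow> real) \<Rightarrow> bool" where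
  vec_poly_const: "vec_poly (\<lambda>x. a)"
| vec_poly_inner: "vec_poly (\<lambda>x. v \<bullet> x)"
| vec_poly_add: "vec_poly f \<Longrightarrow> vec_poly g \<Longrightarrow> vec_poly (\<lambda>x. f x + g x)"
| vec_poly_mult: "vec_poly f \<Longrightarrow> vec_poly g \<Longrightarrow> vec_poly (\<lambda>x. f x * g x)"

lemma vec_poly_diff: "vec_poly f \<Longrightarrow> vec_poly g \<Longrightarrow> vec_poly (\<lambda>x. f x - g x)"
  using vec_poly_add[of f "\<lambda>x. (-1) * g x"] vec_poly_mult vec_poly_const by fastforce

lemma vec_poly_sum:
  "finite A \<Longrightarrow> (\<And>a. a \<in> A \<Longrightarrow> vec_poly (f a)) \<Longrightarrow> vec_poly (\<lambda>x. \<Sum>a\<in>A. f a x)"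
  by (induction A rule: finite_induct) (auto intro: vec_poly_const vec_poly_add)

lemma vec_poly_prod:
  "finite A \<Longrightarrow> (\<And>a. a \<in> A \<Longrightarrow> vec_poly (f a)) \<Longrightarrow> vec_poly (\<lambda>x. \<Prod>a\<in>A. f a x)"
  by (induction A rule: finite_induct) (auto intro: vec_poly_const vec_poly_mult)

lemma vec_poly_prod_list:
  "(\<And>v. v \<in> set vs \<Longrightarrow> vec_poly (f v)) \<Longrightarrow> vec_poly (\<lambda>x. \<Prod>v\<leftarrow>vs. f v x)"
  by (induction vs) (auto intro: vec_poly_const vec_poly_mult)

lemma vec_poly_norm_square: "vec_poly (\<lambda>x::real^'d. (norm x)\<^sup>2)"
proof -
  have "vec_poly (\<lambda>x::real^'d. \<Sum>b\<in>Basis. (b \<bullet> x) * (b \<bullet> x))"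
    by (intro vec_poly_sum vec_poly_mult vec_poly_inner) auto
  then show ?thesis
    by (simp add: power2_norm_eq_inner euclidean_inner[of x x for x] inner_commute)
qed

lemma vec_poly_measurable: "vec_poly f \<Longrightarrow> f \<in> borel_measurable borel"
  by (induction rule: vec_poly.induct) auto

lemma vec_poly_coord_poly:
  "vec_poly f \<Longrightarrow> coord_poly (Basis::(real^'d) set) (\<lambda>y. f (vec_of_coords y))"
proof (induction rule: vec_poly.induct)
  case (vec_poly_inner v)
  show ?case unfolding inner_vec_of_coords
    by (intro coord_poly_sum coord_poly_mult coord_poly_const coord_poly_coord) auto
qed (auto intro: coord_poly.intros)

lemma integrable_gaussian_vec_poly: "vec_poly f \<Longrightarrow> s > 0 \<Longrightarrow> integrable (gaussian_vec s c) f"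
  by (subst integrable_gaussian_vec_iff)
    (auto intro: integrable_gaussian_product_coord_poly vec_poly_coord_poly vec_poly_measurable)

lemma gaussian_vec_stein:
  fixes a c :: "real^'d" and v :: "'r \<Rightarrow> real^'d"
  assumes s: "s > 0" and R: "finite R"
  shows "integral\<^sup>L (gaussian_vec s c) (\<lambda>x. (a \<bullet> (x - c)) * (\<Prod>r\<in>R. v r \<bullet> x))
       = s\<^sup>2 * (\<Sum>t\<in>R. (a \<bullet> v t) * integral\<^sup>L (gaussian_vec s c) (\<lambda>x. \<Prod>r\<in>R-{t}. v r \<bullet> x))"
proof -
  let ?G = "gaussian_product (Basis::(real^'d) set) (\<lambda>b. c \<bullet> b) s"
  define Q where "Q A y = (\<Prod>r\<in>A. \<Sum>b\<in>Basis. (v r \<bullet> b) * y b)" for A y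
  have lift: "integral\<^sup>L (gaussian_vec s c) (\<lambda>x. g x * (\<Prod>r\<in>A. v r \<bullet> x))
      = integral\<^sup>L ?G (\<lambda>y. g (vec_of_coords y) * Q A y)" if "vec_poly g" "finite A" for g A
    using that
    by (subst integral_gaussian_vec[OF s])
      (auto intro!: vec_poly_measurable vec_poly_mult vec_poly_prod vec_poly_inner
        simp: Q_def inner_vec_of_coords)
  have a_centered: "a \<bullet> (vec_of_coords y - c) = (\<Sum>b\<in>Basis. (a \<bullet> b) * (y b - c \<bullet> b))" for y
    by (simp add: inner_diff_right inner_vec_of_coords euclidean_inner[of a c]
        sum_subtractf algebra_simps)
  have int: "integrable ?G (\<lambda>y. (y b - c \<bullet> b) * Q R y)" if "b \<in> Basis" for b
    unfolding Q_def using that R s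
    by (intro integrable_gaussian_product_coord_poly coord_poly_mult coord_poly_diff
        coord_poly_coord coord_poly_const coord_poly_prod coord_poly_sum) auto
  have "vec_poly (\<lambda>x. a \<bullet> (x - c))"
    using vec_poly_diff[OF vec_poly_inner[of a] vec_poly_const[of "a \<bullet> c"]]
    by (simp add: inner_diff_right)
  then have "integral\<^sup>L (gaussian_vec s c) (\<lambda>x. (a \<bullet> (x - c)) * (\<Prod>r\<in>R. v r \<bullet> x))
      = integral\<^sup>L ?G (\<lambda>y. (a \<bullet> (vec_of_coords y - c)) * Q R y)"
    using R by (rule lift)
  also have "\<dots> = integral\<^sup>L ?G (\<lambda>y. \<Sum>b\<in>Basis. (a \<bullet> b) * ((y b - c \<bullet> b) * Q R y))"
    unfolding a_centered by (simp add: sum_distrib_right mult.assoc)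
  also have "\<dots> = (\<Sum>b\<in>Basis. (a \<bullet> b) * integral\<^sup>L ?G (\<lambda>y. (y b - c \<bullet> b) * Q R y))"
    using int by simp
  also have "\<dots> = (\<Sum>b\<in>Basis. (a \<bullet> b) * (s\<^sup>2 * (\<Sum>t\<in>R. (v t \<bullet> b) * integral\<^sup>L ?G (Q (R - {t})))))"
    unfolding Q_def
    by (intro sum.cong refl arg_cong2[where f="(*)"] gaussian_product_stein R s) auto
  also have "\<dots> = s\<^sup>2 * (\<Sum>t\<in>R. (a \<bullet> v t) * integral\<^sup>L ?G (Q (R - {t})))"
    by (simp add: sum_distrib_left sum_distrib_right euclidean_inner[of a] inner_commute
        algebra_simps sum.swap[of _ Basis])
  also have "\<dots> = s\<^sup>2 * (\<Sum>t\<in>R. (a \<bullet> v t) * integral\<^sup>L (gaussian_vec s c) (\<lambda>x. \<Prod>r\<in>R-{t}. v r \<bullet> x))"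
    using lift[of "\<lambda>_. 1"] R by (simp add: vec_poly_const)
  finally show ?thesis .
qed

section \<open>Gaussian moments of products of linear forms\<close>

definition lin_prod :: "(real^'d) list \<Rightarrow> real^'d \<Rightarrow> real" where
  "lin_prod vs x = (\<Prod>v\<leftarrow>vs. v \<bullet> x)"

lemma lin_prod_Nil: "lin_prod [] = (\<lambda>_. 1)"
  by (simp add: lin_prod_def fun_eq_iff)

lemma lin_prod_Cons: "lin_prod (v # vs) = (\<lambda>x. (v \<bullet> x) * lin_prod vs x)"
  by (simp add: lin_prod_def fun_eq_iff)

lemma vec_poly_lin_prod: "vec_poly (lin_prod vs)"
  unfolding lin_prod_def by (intro vec_poly_prod_list vec_poly_inner)

definition gaussian_moment :: "real \<Rightarrow> real^'d \<Rightarrow> (real^'d) list \<Rightarrow> real" where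
  "gaussian_moment s c vs = integral\<^sup>L (gaussian_vec s c) (lin_prod vs)"

definition gaussian_sqnorm_moment :: "real \<Rightarrow> real^'d \<Rightarrow> (real^'d) list \<Rightarrow> real" where
  "gaussian_sqnorm_moment s c vs = integral\<^sup>L (gaussian_vec s c) (\<lambda>x. (norm x)\<^sup>2 * lin_prod vs x)"

definition remove_nth :: "nat \<Rightarrow> 'a list \<Rightarrow> 'a list" where
  "remove_nth t xs = take t xs @ drop (Suc t) xs"

lemma remove_nth_Cons [simp]:
  "remove_nth 0 (x # xs) = xs"
  "remove_nth (Suc t) (x # xs) = x # remove_nth t xs"
  by (simp_all add: remove_nth_def)

lemma map_remove_nth: "map f (remove_nth t xs) = remove_nth t (map f xs)"
  by (simp add: remove_nth_def take_map drop_map)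

lemma prod_list_remove_nth:
  fixes xs :: "'a::comm_monoid_mult list"
  assumes t: "t < length xs"
  shows "prod_list (remove_nth t xs) = (\<Prod>i\<in>{..<length xs}-{t}. xs ! i)"
proof -
  have "prod_list (remove_nth t xs) = prod_list (xs[t := 1])"
    using t by (simp add: upd_conv_take_nth_drop remove_nth_def)
  also have "\<dots> = (\<Prod>i\<in>{..<length xs}. xs[t := 1] ! i)"
    by (simp add: prod.list_conv_set_nth atLeast0LessThan)
  also have "\<dots> = (\<Prod>i\<in>{..<length xs}-{t}. xs ! i)"
    using t by (simp add: prod.remove)
  finally show ?thesis .
qed

lemma gaussian_moment_Nil [simp]: "s > 0 \<Longrightarrow> gaussian_moment s c [] = 1"
  by (simp add: gaussian_moment_def lin_prod_Nil prob_space.prob_space[OF prob_space_gaussian_vec])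

text \<open>Wick's recursion: split \<open>a \<bullet> x = a \<bullet> (x - c) + a \<bullet> c\<close> and apply Stein's identity to the
  first summand.\<close>

lemma gaussian_moment_Cons:
  assumes s: "s > 0"
  shows "gaussian_moment s c (a # vs) = (a \<bullet> c) * gaussian_moment s c vs
    + s\<^sup>2 * (\<Sum>t<length vs. (a \<bullet> vs ! t) * gaussian_moment s c (remove_nth t vs))"
proof -
  let ?G = "gaussian_vec s c"
  define n where "n = length vs"
  have lin_prod_nth: "lin_prod vs x = (\<Prod>r\<in>{..<n}. vs ! r \<bullet> x)" for x
    by (simp add: lin_prod_def prod.list_conv_set_nth atLeast0LessThan n_def)
  have lin_prod_remove_nth: "lin_prod (remove_nth t vs) = (\<lambda>x. \<Prod>r\<in>{..<n}-{t}. vs ! r \<bullet> x)"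
    if "t < n" for t
    using that prod_list_remove_nth[of t "map (\<lambda>v. v \<bullet> x) vs" for x]
    by (simp add: fun_eq_iff lin_prod_def map_remove_nth n_def)
  have "vec_poly (\<lambda>x. a \<bullet> (x - c))"
    using vec_poly_diff[OF vec_poly_inner[of a] vec_poly_const[of "a \<bullet> c"]]
    by (simp add: inner_diff_right)
  then have "integrable ?G (\<lambda>x. (a \<bullet> (x - c)) * lin_prod vs x)"
    by (intro integrable_gaussian_vec_poly vec_poly_mult vec_poly_lin_prod s)
  moreover have "integrable ?G (\<lambda>x. (a \<bullet> c) * lin_prod vs x)"
    by (intro integrable_mult_right integrable_gaussian_vec_poly vec_poly_lin_prod s)
  moreover have "gaussian_moment s c (a # vs)
      = integral\<^sup>L ?G (\<lambda>x. (a \<bullet> (x - c)) * lin_prod vs x + (a \<bullet> c) * lin_prod vs x)"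
    unfolding gaussian_moment_def
    by (intro Bochner_Integration.integral_cong) (simp_all add: lin_prod_Cons inner_diff_right algebra_simps)
  ultimately have "gaussian_moment s c (a # vs)
      = integral\<^sup>L ?G (\<lambda>x. (a \<bullet> (x - c)) * lin_prod vs x) + (a \<bullet> c) * gaussian_moment s c vs"
    by (simp add: gaussian_moment_def)
  also have "integral\<^sup>L ?G (\<lambda>x. (a \<bullet> (x - c)) * lin_prod vs x)
      = s\<^sup>2 * (\<Sum>t<n. (a \<bullet> vs ! t) * integral\<^sup>L ?G (\<lambda>x. \<Prod>r\<in>{..<n}-{t}. vs ! r \<bullet> x))"
    unfolding lin_prod_nth by (rule gaussian_vec_stein[OF s]) simp
  also have "\<dots> = s\<^sup>2 * (\<Sum>t<n. (a \<bullet> vs ! t) * gaussian_moment s c (remove_nth t vs))"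
    unfolding gaussian_moment_def
    by (intro arg_cong2[where f="(*)"] sum.cong refl) (simp_all add: lin_prod_remove_nth)
  finally show ?thesis by (simp add: n_def)
qed

lemma gaussian_moment_Cons_linear:
  assumes s: "s > 0"
  shows "(\<Sum>b\<in>Basis. (b \<bullet> w) * gaussian_moment s c (b # ws)) = gaussian_moment s c (w # ws)"
proof -
  have "(\<Sum>b\<in>Basis. (b \<bullet> w) * gaussian_moment s c (b # ws))
      = integral\<^sup>L (gaussian_vec s c) (\<lambda>x. \<Sum>b\<in>Basis. (b \<bullet> w) * ((b \<bullet> x) * lin_prod ws x))"
    unfolding gaussian_moment_def
    by (simp add: lin_prod_Cons integrable_gaussian_vec_poly vec_poly.intros vec_poly_lin_prod s)
  also have "\<dots> = gaussian_moment s c (w # ws)"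
  proof -
    have "(\<Sum>b\<in>Basis. (b \<bullet> w) * ((b \<bullet> x) * lin_prod ws x)) = (w \<bullet> x) * lin_prod ws x" for x
      unfolding euclidean_inner[of w x] by (simp add: sum_distrib_right inner_commute mult.assoc)
    then show ?thesis by (simp add: gaussian_moment_def lin_prod_Cons)
  qed
  finally show ?thesis .
qed

lemma gaussian_sqnorm_moment_eq:
  assumes s: "s > 0"
  shows "gaussian_sqnorm_moment s (c::real^'d) vs = gaussian_moment s c (c # vs)
    + s\<^sup>2 * (CARD('d) * gaussian_moment s c vs
              + (\<Sum>t<length vs. gaussian_moment s c (vs ! t # remove_nth t vs)))"
proof -
  let ?m = "gaussian_moment s c"
  have "gaussian_sqnorm_moment s c vs = integral\<^sup>L (gaussian_vec s c) (\<lambda>x. \<Sum>b\<in>Basis. lin_prod (b # b # vs) x)"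
  proof -
    have "(norm x)\<^sup>2 * lin_prod vs x = (\<Sum>b\<in>Basis. lin_prod (b # b # vs) x)" for x :: "real^'d"
      unfolding power2_norm_eq_inner euclidean_inner[of x x]
      by (simp add: lin_prod_Cons sum_distrib_right inner_commute mult.assoc)
    then show ?thesis by (simp add: gaussian_sqnorm_moment_def)
  qed
  also have "\<dots> = (\<Sum>b\<in>Basis. ?m (b # b # vs))"
    unfolding gaussian_moment_def
    by (simp add: lin_prod_Cons integrable_gaussian_vec_poly vec_poly.intros vec_poly_lin_prod s)
  also have "\<dots> = (\<Sum>b\<in>Basis. (b \<bullet> c) * ?m (b # vs)
      + s\<^sup>2 * ((b \<bullet> b) * ?m vs + (\<Sum>t<length vs. (b \<bullet> vs ! t) * ?m (b # remove_nth t vs))))"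
    by (intro sum.cong refl, subst gaussian_moment_Cons[OF s])
      (simp add: sum.lessThan_Suc_shift del: sum.lessThan_Suc)
  also have "\<dots> = ?m (c # vs) + s\<^sup>2 * (CARD('d) * ?m vs + (\<Sum>t<length vs. ?m (vs ! t # remove_nth t vs)))"
  proof -
    have "(\<Sum>b\<in>(Basis::(real^'d) set). (b \<bullet> b) * ?m vs) = CARD('d) * ?m vs"
      by (simp add: sum_distrib_right[symmetric])
    moreover have "(\<Sum>b\<in>Basis. \<Sum>t<length vs. (b \<bullet> vs ! t) * ?m (b # remove_nth t vs))
        = (\<Sum>t<length vs. ?m (vs ! t # remove_nth t vs))"
      by (subst sum.swap) (simp add: gaussian_moment_Cons_linear[OF s])
    ultimately show ?thesis
      by (simp add: sum.distrib sum_distrib_left[symmetric] gaussian_moment_Cons_linear[OF s]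
          algebra_simps)
  qed
  finally show ?thesis .
qed

lemma gaussian_moment_1: "s > 0 \<Longrightarrow> gaussian_moment s c [a] = a \<bullet> c"
  by (simp add: gaussian_moment_Cons)

lemma gaussian_moment_2:
  "s > 0 \<Longrightarrow> gaussian_moment s c [a, b] = (a \<bullet> c) * (b \<bullet> c) + s\<^sup>2 * (a \<bullet> b)"
  by (simp add: gaussian_moment_Cons numeral_eq_Suc inner_commute algebra_simps)

lemma gaussian_moment_3:
  "s > 0 \<Longrightarrow> gaussian_moment s c [a,b,e] =
       (a \<bullet> c) * (b \<bullet> c) * (e \<bullet> c)
     + (a \<bullet> c) * s\<^sup>2 * (b \<bullet> e)
     + s\<^sup>2 * (a \<bullet> b) * (e \<bullet> c)
     + s\<^sup>2 * (a \<bullet> e) * (b \<bullet> c)"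
  by (simp add: gaussian_moment_Cons numeral_eq_Suc inner_commute algebra_simps)

lemma gaussian_moment_4:
  "s > 0 \<Longrightarrow> gaussian_moment s c [a,b,e,f] =
       (a \<bullet> c) * (b \<bullet> c) * (e \<bullet> c) * (f \<bullet> c)
     + (a \<bullet> c) * (b \<bullet> c) * s\<^sup>2 * (e \<bullet> f)
     + (a \<bullet> c) * s\<^sup>2 * (b \<bullet> e) * (f \<bullet> c)
     + (a \<bullet> c) * s\<^sup>2 * (b \<bullet> f) * (e \<bullet> c)
     + s\<^sup>2 * (a \<bullet> b) * (e \<bullet> c) * (f \<bullet> c)
     + s\<^sup>2 * (a \<bullet> b) * s\<^sup>2 * (e \<bullet> f)
     + s\<^sup>2 * (a \<bullet> e) * (b \<bullet> c) * (f \<bullet> c)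
     + s\<^sup>2 * (a \<bullet> e) * s\<^sup>2 * (b \<bullet> f)
     + s\<^sup>2 * (a \<bullet> f) * (b \<bullet> c) * (e \<bullet> c)
     + s\<^sup>2 * (a \<bullet> f) * s\<^sup>2 * (b \<bullet> e)"
  by (simp add: gaussian_moment_Cons numeral_eq_Suc inner_commute algebra_simps)

lemma gaussian_moment_5:
  "s > 0 \<Longrightarrow> gaussian_moment s c [a,b,e,f,g] =
       (a \<bullet> c) * (b \<bullet> c) * (e \<bullet> c) * (f \<bullet> c) * (g \<bullet> c)
     + (a \<bullet> c) * (b \<bullet> c) * (e \<bullet> c) * s\<^sup>2 * (f \<bullet> g)
     + (a \<bullet> c) * (b \<bullet> c) * s\<^sup>2 * (e \<bullet> f) * (g \<bullet> c)
     + (a \<bullet> c) * (b \<bullet> c) * s\<^sup>2 * (e \<bullet> g) * (f \<bullet> c)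
     + (a \<bullet> c) * s\<^sup>2 * (b \<bullet> e) * (f \<bullet> c) * (g \<bullet> c)
     + (a \<bullet> c) * s\<^sup>2 * (b \<bullet> e) * s\<^sup>2 * (f \<bullet> g)
     + (a \<bullet> c) * s\<^sup>2 * (b \<bullet> f) * (e \<bullet> c) * (g \<bullet> c)
     + (a \<bullet> c) * s\<^sup>2 * (b \<bullet> f) * s\<^sup>2 * (e \<bullet> g)
     + (a \<bullet> c) * s\<^sup>2 * (b \<bullet> g) * (e \<bullet> c) * (f \<bullet> c)
     + (a \<bullet> c) * s\<^sup>2 * (b \<bullet> g) * s\<^sup>2 * (e \<bullet> f)
     + s\<^sup>2 * (a \<bullet> b) * (e \<bullet> c) * (f \<bullet> c) * (g \<bullet> c)
     + s\<^sup>2 * (a \<bullet> b) * (e \<bullet> c) * s\<^sup>2 * (f \<bullet> g)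
     + s\<^sup>2 * (a \<bullet> b) * s\<^sup>2 * (e \<bullet> f) * (g \<bullet> c)
     + s\<^sup>2 * (a \<bullet> b) * s\<^sup>2 * (e \<bullet> g) * (f \<bullet> c)
     + s\<^sup>2 * (a \<bullet> e) * (b \<bullet> c) * (f \<bullet> c) * (g \<bullet> c)
     + s\<^sup>2 * (a \<bullet> e) * (b \<bullet> c) * s\<^sup>2 * (f \<bullet> g)
     + s\<^sup>2 * (a \<bullet> e) * s\<^sup>2 * (b \<bullet> f) * (g \<bullet> c)
     + s\<^sup>2 * (a \<bullet> e) * s\<^sup>2 * (b \<bullet> g) * (f \<bullet> c)
     + s\<^sup>2 * (a \<bullet> f) * (b \<bullet> c) * (e \<bullet> c) * (g \<bullet> c)
     + s\<^sup>2 * (a \<bullet> f) * (b \<bullet> c) * s\<^sup>2 * (e \<bullet> g)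
     + s\<^sup>2 * (a \<bullet> f) * s\<^sup>2 * (b \<bullet> e) * (g \<bullet> c)
     + s\<^sup>2 * (a \<bullet> f) * s\<^sup>2 * (b \<bullet> g) * (e \<bullet> c)
     + s\<^sup>2 * (a \<bullet> g) * (b \<bullet> c) * (e \<bullet> c) * (f \<bullet> c)
     + s\<^sup>2 * (a \<bullet> g) * (b \<bullet> c) * s\<^sup>2 * (e \<bullet> f)
     + s\<^sup>2 * (a \<bullet> g) * s\<^sup>2 * (b \<bullet> e) * (f \<bullet> c)
     + s\<^sup>2 * (a \<bullet> g) * s\<^sup>2 * (b \<bullet> f) * (e \<bullet> c)"
  by (simp add: gaussian_moment_Cons numeral_eq_Suc inner_commute algebra_simps)

section \<open>The token law and the independent rows\<close>

lemma
  fixes f :: "real^'d \<Rightarrow> real"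
  assumes s: "s > 0" and f: "vec_poly f"
  shows integrable_mixture_vec_poly: "integrable (mixture s m0 m1) f"
    and integral_mixture_vec_poly: "integral\<^sup>L (mixture s m0 m1) f
          = (integral\<^sup>L (gaussian_vec s m0) f + integral\<^sup>L (gaussian_vec s m1) f) / 2"
proof -
  have f_meas: "f \<in> borel_measurable borel"
    using f by (rule vec_poly_measurable)
  have int: "integrable lborel (\<lambda>x. gauss_density s m x * f x)" for m :: "real^'d"
    using integrable_gaussian_vec_poly[OF f s, of m] f_meas
    unfolding gaussian_vec_def by (subst (asm) integrable_density) (auto simp: gauss_density_nonneg)
  have split: "(\<lambda>x. (gauss_density s m0 x / 2 + gauss_density s m1 x / 2) * f x)
      = (\<lambda>x. gauss_density s m0 x * f x / 2 + gauss_density s m1 x * f x / 2)"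
    by (auto simp: algebra_simps)
  show "integrable (mixture s m0 m1) f"
    unfolding mixture_def using int f_meas
    by (subst integrable_density) (auto simp: split gauss_density_nonneg)
  show "integral\<^sup>L (mixture s m0 m1) f
      = (integral\<^sup>L (gaussian_vec s m0) f + integral\<^sup>L (gaussian_vec s m1) f) / 2"
  proof -
    have "integral\<^sup>L (gaussian_vec s m) f = (LBINT x. gauss_density s m x * f x)" for m :: "real^'d"
      unfolding gaussian_vec_def by (subst integral_density) (auto simp: f_meas gauss_density_nonneg)
    moreover have "integral\<^sup>L (mixture s m0 m1) f
        = (LBINT x. (gauss_density s m0 x / 2 + gauss_density s m1 x / 2) * f x)"
      unfolding mixture_def by (subst integral_density) (auto simp: f_meas gauss_density_nonneg)
    ultimately show ?thesis
      using int by (simp add: split)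
  qed
qed

lemma prob_space_mixture:
  assumes s: "s > 0"
  shows "prob_space (mixture s m0 m1)"
proof (rule prob_spaceI)
  let ?M = "mixture s m0 m1"
  have "integrable ?M (\<lambda>_. 1::real)"
    by (rule integrable_mixture_vec_poly[OF s vec_poly_const])
  then have "emeasure ?M (space ?M) < \<infinity>"
    by (simp add: integrable_iff_bounded)
  moreover have "measure ?M (space ?M) = 1"
    using integral_mixture_vec_poly[OF s vec_poly_const[of 1], of m0 m1]
    by (simp add: prob_space.prob_space[OF prob_space_gaussian_vec[OF s]])
  ultimately show "emeasure ?M (space ?M) = 1"
    by (simp add: emeasure_eq_ennreal_measure)
qed

lemma sets_mixture [simp, measurable_cong]: "sets (mixture s m0 m1) = sets borel"
  by (simp add: mixture_def)

definition mixture_moment :: "real \<Rightarrow> real^'d \<Rightarrow> real^'d \<Rightarrow> (real^'d) list \<Rightarrow> real" where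
  "mixture_moment s m0 m1 vs = (gaussian_moment s m0 vs + gaussian_moment s m1 vs) / 2"

definition mixture_sqnorm_moment :: "real \<Rightarrow> real^'d \<Rightarrow> real^'d \<Rightarrow> (real^'d) list \<Rightarrow> real" where
  "mixture_sqnorm_moment s m0 m1 vs = (gaussian_sqnorm_moment s m0 vs + gaussian_sqnorm_moment s m1 vs) / 2"

lemma integral_mixture_lin_prod:
  "s > 0 \<Longrightarrow> integral\<^sup>L (mixture s m0 m1) (lin_prod vs) = mixture_moment s m0 m1 vs"
  by (simp add: integral_mixture_vec_poly vec_poly_lin_prod mixture_moment_def gaussian_moment_def)

lemma integral_mixture_sqnorm_lin_prod:
  "s > 0 \<Longrightarrow> integral\<^sup>L (mixture s m0 m1) (\<lambda>x. (norm x)\<^sup>2 * lin_prod vs x)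
     = mixture_sqnorm_moment s m0 m1 vs"
  by (simp add: integral_mixture_vec_poly vec_poly_mult vec_poly_norm_square vec_poly_lin_prod
      mixture_sqnorm_moment_def gaussian_sqnorm_moment_def)

lemma mixture_moment_Cons_linear:
  "s > 0 \<Longrightarrow> (\<Sum>b\<in>Basis. (b \<bullet> w) * mixture_moment s m0 m1 (b # ws)) = mixture_moment s m0 m1 (w # ws)"
  by (simp add: mixture_moment_def sum_divide_distrib[symmetric] sum.distrib distrib_left
      gaussian_moment_Cons_linear)

lemma integral_data_law_prod:
  fixes F :: "nat \<Rightarrow> real^'d \<Rightarrow> real"
  assumes s: "s > 0" and J: "J \<subseteq> {..<L}" and F: "\<And>j. j \<in> J \<Longrightarrow> vec_poly (F j)"
  shows "integrable (data_law L s m0 m1) (\<lambda>X. \<Prod>j\<in>J. F j (X j))"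
    and "integral\<^sup>L (data_law L s m0 m1) (\<lambda>X. \<Prod>j\<in>J. F j (X j))
       = (\<Prod>j\<in>J. integral\<^sup>L (mixture s m0 m1) (F j))"
proof -
  let ?F = "\<lambda>j. if j \<in> J then F j else (\<lambda>_. 1)"
  interpret product_sigma_finite "\<lambda>_::nat. mixture s m0 m1"
    by (simp add: product_sigma_finite_def prob_space_imp_sigma_finite prob_space_mixture s)
  have int: "integrable (mixture s m0 m1) (?F j)" for j
    using F by (auto intro: integrable_mixture_vec_poly[OF s] vec_poly_const)
  have restrict: "(\<Prod>i<L. ?F i (X i)) = (\<Prod>j\<in>J. F j (X j))" for X :: "nat \<Rightarrow> real^'d"
    using J prod.inter_restrict[of "{..<L}" "\<lambda>j. F j (X j)" J]
    by (simp add: if_distrib[where f="\<lambda>g. g (X _)" for X] Int_absorb1 cong: if_cong)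
  have "(\<Prod>i<L. integral\<^sup>L (mixture s m0 m1) (?F i)) = (\<Prod>j\<in>J. integral\<^sup>L (mixture s m0 m1) (F j))"
    using J prod.inter_restrict[of "{..<L}" "\<lambda>j. integral\<^sup>L (mixture s m0 m1) (F j)" J]
      prob_space.prob_space[OF prob_space_mixture[OF s, of m0 m1]]
    by (simp add: if_distrib[where f="integral\<^sup>L _"] Int_absorb1 cong: if_cong)
  then show "integrable (data_law L s m0 m1) (\<lambda>X. \<Prod>j\<in>J. F j (X j))"
    and "integral\<^sup>L (data_law L s m0 m1) (\<lambda>X. \<Prod>j\<in>J. F j (X j))
       = (\<Prod>j\<in>J. integral\<^sup>L (mixture s m0 m1) (F j))"
    using product_integrable_prod[of "{..<L}" ?F] product_integral_prod[of "{..<L}" ?F] int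
    unfolding data_law_def restrict by auto
qed

lemma has_bochner_integral_data_law_row:
  fixes f :: "real^'d \<Rightarrow> real"
  assumes s: "s > 0" and row: "l < L" and poly: "vec_poly f"
    and integral: "integral\<^sup>L (mixture s m0 m1) f = a"
  shows "has_bochner_integral (data_law L s m0 m1) (\<lambda>X. f (X l)) a"
  using integral_data_law_prod[OF s, of "{l}" L "\<lambda>_. f"] row poly integral
  by (simp add: has_bochner_integral_iff)

lemma has_bochner_integral_data_law_two_rows:
  fixes f g :: "real^'d \<Rightarrow> real"
  assumes s: "s > 0" and rows: "l < L" "k < L" "l \<noteq> k" and poly: "vec_poly f" "vec_poly g"
    and integrals: "integral\<^sup>L (mixture s m0 m1) f = a" "integral\<^sup>L (mixture s m0 m1) g = b"
  shows "has_bochner_integral (data_law L s m0 m1) (\<lambda>X. f (X l) * g (X k)) (a * b)"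
  using integral_data_law_prod[OF s, of "{l, k}" L "\<lambda>j. if j = l then f else g"] rows poly integrals
  by (simp add: has_bochner_integral_iff)

lemma has_bochner_integral_data_law_three_rows:
  fixes f g h :: "real^'d \<Rightarrow> real"
  assumes s: "s > 0" and rows: "l < L" "k < L" "k' < L" "l \<noteq> k" "l \<noteq> k'" "k \<noteq> k'"
    and poly: "vec_poly f" "vec_poly g" "vec_poly h"
    and integrals: "integral\<^sup>L (mixture s m0 m1) f = a" "integral\<^sup>L (mixture s m0 m1) g = b"
      "integral\<^sup>L (mixture s m0 m1) h = c"
  shows "has_bochner_integral (data_law L s m0 m1) (\<lambda>X. f (X l) * g (X k) * h (X k')) (a * b * c)"
  using integral_data_law_prod[OF s, of "{l, k, k'}" L "\<lambda>j. if j = l then f else if j = k then g else h"]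
    rows poly integrals by (simp add: has_bochner_integral_iff mult.assoc)

section \<open>The risk as a combination of moments\<close>

text \<open>\<open>proj_form u0 u1 x y\<close> is the attention weight \<open>x\<^sup>T (u0 u0\<^sup>T + u1 u1\<^sup>T) y\<close> of \<open>Tlin\<close>.\<close>

definition proj_form :: "real^'d \<Rightarrow> real^'d \<Rightarrow> real^'d \<Rightarrow> real^'d \<Rightarrow> real" where
  "proj_form u0 u1 x y = (x \<bullet> u0) * (u0 \<bullet> y) + (x \<bullet> u1) * (u1 \<bullet> y)"

text \<open>\<open>mixture_second_moment s m0 m1 u\<close> is \<open>E[x (x \<bullet> u)]\<close> for \<open>x\<close> distributed as one token.\<close>

definition mixture_second_moment :: "real \<Rightarrow> real^'d \<Rightarrow> real^'d \<Rightarrow> real^'d \<Rightarrow> real^'d" where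
  "mixture_second_moment s m0 m1 u = s\<^sup>2 *\<^sub>R u + (1/2) *\<^sub>R ((u \<bullet> m0) *\<^sub>R m0 + (u \<bullet> m1) *\<^sub>R m1)"

lemma mixture_moment_pair:
  "s > 0 \<Longrightarrow> mixture_moment s m0 m1 [b, u] = b \<bullet> mixture_second_moment s m0 m1 u"
  by (simp add: mixture_moment_def mixture_second_moment_def gaussian_moment_2 inner_add_right
      algebra_simps)

lemma sum_Basis_mixture_moment_pair:
  "s > 0 \<Longrightarrow> (\<Sum>b\<in>Basis. mixture_moment s m0 m1 (b # ws) * mixture_moment s m0 m1 [b, u])
     = mixture_moment s m0 m1 (mixture_second_moment s m0 m1 u # ws)"
  using mixture_moment_Cons_linear[of s "mixture_second_moment s m0 m1 u" m0 m1 ws]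
  by (simp add: mixture_moment_pair inner_commute mult.commute)

lemma inner_eq_sum_Basis: "x \<bullet> y = (\<Sum>b\<in>Basis. (b \<bullet> x) * (b \<bullet> (y::real^'d)))"
  by (subst euclidean_inner) (simp add: inner_commute)

locale mixture_rows =
  fixes L :: nat and s :: real and m0 m1 u0 u1 :: "real^'d"
  assumes s: "s > 0"
begin

abbreviation (input) "P \<equiv> data_law L s m0 m1"
abbreviation (input) "M \<equiv> mixture_moment s m0 m1"
abbreviation (input) "N \<equiv> mixture_sqnorm_moment s m0 m1"
abbreviation (input) "S \<equiv> mixture_second_moment s m0 m1"
abbreviation (input) "q \<equiv> proj_form u0 u1"

lemma has_bochner_integral_row_sqnorm_lin_prod:
  "l < L \<Longrightarrow> has_bochner_integral P (\<lambda>X. (norm (X l))\<^sup>2 * lin_prod vs (X l)) (N vs)"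
  by (intro has_bochner_integral_data_law_row[where f="\<lambda>x. (norm x)\<^sup>2 * lin_prod vs x"] s
      vec_poly_mult vec_poly_norm_square vec_poly_lin_prod integral_mixture_sqnorm_lin_prod)

lemma has_bochner_integral_lin_prod_two_rows:
  "l < L \<Longrightarrow> k < L \<Longrightarrow> l \<noteq> k \<Longrightarrow>
     has_bochner_integral P (\<lambda>X. lin_prod vs (X l) * lin_prod ws (X k)) (M vs * M ws)"
  by (intro has_bochner_integral_data_law_two_rows s vec_poly_lin_prod integral_mixture_lin_prod)

lemma has_bochner_integral_lin_prod_sqnorm_two_rows:
  "l < L \<Longrightarrow> k < L \<Longrightarrow> l \<noteq> k \<Longrightarrow>
     has_bochner_integral P (\<lambda>X. lin_prod vs (X l) * ((norm (X k))\<^sup>2 * lin_prod ws (X k))) (M vs * N ws)"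
  by (intro has_bochner_integral_data_law_two_rows[where g="\<lambda>x. (norm x)\<^sup>2 * lin_prod ws x"] s
      vec_poly_mult vec_poly_norm_square vec_poly_lin_prod integral_mixture_lin_prod
      integral_mixture_sqnorm_lin_prod)

lemma has_bochner_integral_lin_prod_three_rows:
  "l < L \<Longrightarrow> k < L \<Longrightarrow> k' < L \<Longrightarrow> l \<noteq> k \<Longrightarrow> l \<noteq> k' \<Longrightarrow> k \<noteq> k' \<Longrightarrow>
     has_bochner_integral P (\<lambda>X. lin_prod vs (X l) * lin_prod ws (X k) * lin_prod zs (X k'))
       (M vs * M ws * M zs)"
  by (intro has_bochner_integral_data_law_three_rows s vec_poly_lin_prod integral_mixture_lin_prod)

lemma has_bochner_integral_quadratic_same_row:
  assumes l: "l < L"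
  shows "has_bochner_integral P (\<lambda>X. q (X l) (X l) * (X l \<bullet> X l)) (N [u0, u0] + N [u1, u1])"
proof -
  have "(\<lambda>X. q (X l) (X l) * (X l \<bullet> X l)) = (\<lambda>X. (norm (X l))\<^sup>2 * lin_prod [u0, u0] (X l)
      + (norm (X l))\<^sup>2 * lin_prod [u1, u1] (X l))"
    by (simp add: fun_eq_iff proj_form_def lin_prod_Cons lin_prod_Nil power2_norm_eq_inner
        inner_commute algebra_simps)
  then show ?thesis
    by (simp add: has_bochner_integral_add has_bochner_integral_row_sqnorm_lin_prod l)
qed

lemma has_bochner_integral_quadratic_two_rows:
  assumes lk: "l < L" "k < L" "l \<noteq> k"
  shows "has_bochner_integral P (\<lambda>X. q (X l) (X k) * (X l \<bullet> X k)) (M [S u0, u0] + M [S u1, u1])"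
proof -
  have "(\<lambda>X. q (X l) (X k) * (X l \<bullet> X k)) = (\<lambda>X. \<Sum>b\<in>Basis.
      lin_prod [b, u0] (X l) * lin_prod [b, u0] (X k) + lin_prod [b, u1] (X l) * lin_prod [b, u1] (X k))"
    by (simp add: fun_eq_iff inner_eq_sum_Basis[of "X l" "X k" for X] sum_distrib_left sum.distrib proj_form_def
        lin_prod_Cons lin_prod_Nil inner_commute algebra_simps)
  moreover have "has_bochner_integral P (\<lambda>X. \<Sum>b\<in>Basis.
      lin_prod [b, u0] (X l) * lin_prod [b, u0] (X k) + lin_prod [b, u1] (X l) * lin_prod [b, u1] (X k))
      (\<Sum>b\<in>Basis. M [b, u0] * M [b, u0] + M [b, u1] * M [b, u1])"
    by (intro has_bochner_integral_sum has_bochner_integral_add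
        has_bochner_integral_lin_prod_two_rows lk)
  ultimately show ?thesis
    using sum_Basis_mixture_moment_pair[OF s, where ws="[u0]" and u=u0]
      sum_Basis_mixture_moment_pair[OF s, where ws="[u1]" and u=u1]
    by (simp add: sum.distrib)
qed

lemma has_bochner_integral_quartic_same_row:
  assumes l: "l < L"
  shows "has_bochner_integral P (\<lambda>X. q (X l) (X l) * q (X l) (X l) * (X l \<bullet> X l))
    (N [u0, u0, u0, u0] + 2 * N [u0, u0, u1, u1] + N [u1, u1, u1, u1])"
proof -
  have "(\<lambda>X. q (X l) (X l) * q (X l) (X l) * (X l \<bullet> X l)) = (\<lambda>X.
      (norm (X l))\<^sup>2 * lin_prod [u0, u0, u0, u0] (X l) + 2 * ((norm (X l))\<^sup>2 * lin_prod [u0, u0, u1, u1] (X l))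
      + (norm (X l))\<^sup>2 * lin_prod [u1, u1, u1, u1] (X l))"
    by (simp add: fun_eq_iff proj_form_def lin_prod_Cons lin_prod_Nil power2_norm_eq_inner
        inner_commute algebra_simps)
  then show ?thesis
    by (simp add: has_bochner_integral_add has_bochner_integral_mult_right
        has_bochner_integral_row_sqnorm_lin_prod l)
qed

lemma has_bochner_integral_quartic_two_rows_outer:
  assumes lk: "l < L" "k < L" "l \<noteq> k"
  shows "has_bochner_integral P (\<lambda>X. q (X l) (X l) * q (X l) (X k) * (X l \<bullet> X k))
    (M [S u0, u0, u0, u0] + M [S u0, u1, u1, u0] + M [S u1, u0, u0, u1] + M [S u1, u1, u1, u1])"
proof -
  have "(\<lambda>X. q (X l) (X l) * q (X l) (X k) * (X l \<bullet> X k)) = (\<lambda>X. \<Sum>b\<in>Basis.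
        lin_prod [b, u0, u0, u0] (X l) * lin_prod [b, u0] (X k)
      + lin_prod [b, u1, u1, u0] (X l) * lin_prod [b, u0] (X k)
      + lin_prod [b, u0, u0, u1] (X l) * lin_prod [b, u1] (X k)
      + lin_prod [b, u1, u1, u1] (X l) * lin_prod [b, u1] (X k))"
    by (simp add: fun_eq_iff inner_eq_sum_Basis[of "X l" "X k" for X] sum_distrib_left sum.distrib
        proj_form_def lin_prod_Cons lin_prod_Nil inner_commute algebra_simps)
  moreover have "has_bochner_integral P (\<lambda>X. \<Sum>b\<in>Basis.
        lin_prod [b, u0, u0, u0] (X l) * lin_prod [b, u0] (X k)
      + lin_prod [b, u1, u1, u0] (X l) * lin_prod [b, u0] (X k)
      + lin_prod [b, u0, u0, u1] (X l) * lin_prod [b, u1] (X k)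
      + lin_prod [b, u1, u1, u1] (X l) * lin_prod [b, u1] (X k))
      (\<Sum>b\<in>Basis. M [b, u0, u0, u0] * M [b, u0] + M [b, u1, u1, u0] * M [b, u0]
        + M [b, u0, u0, u1] * M [b, u1] + M [b, u1, u1, u1] * M [b, u1])"
    by (intro has_bochner_integral_sum has_bochner_integral_add
        has_bochner_integral_lin_prod_two_rows lk)
  ultimately show ?thesis
    using sum_Basis_mixture_moment_pair[OF s, where ws="[u0, u0, u0]" and u=u0]
      sum_Basis_mixture_moment_pair[OF s, where ws="[u1, u1, u0]" and u=u0]
      sum_Basis_mixture_moment_pair[OF s, where ws="[u0, u0, u1]" and u=u1]
      sum_Basis_mixture_moment_pair[OF s, where ws="[u1, u1, u1]" and u=u1]
    by (simp add: sum.distrib)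
qed

lemma has_bochner_integral_quartic_two_rows_inner:
  assumes lk: "l < L" "k < L" "l \<noteq> k"
  shows "has_bochner_integral P (\<lambda>X. q (X l) (X k) * q (X l) (X k) * (X k \<bullet> X k))
    (M [u0, u0] * N [u0, u0] + 2 * (M [u0, u1] * N [u0, u1]) + M [u1, u1] * N [u1, u1])"
proof -
  have "(\<lambda>X. q (X l) (X k) * q (X l) (X k) * (X k \<bullet> X k)) = (\<lambda>X.
        lin_prod [u0, u0] (X l) * ((norm (X k))\<^sup>2 * lin_prod [u0, u0] (X k))
      + 2 * (lin_prod [u0, u1] (X l) * ((norm (X k))\<^sup>2 * lin_prod [u0, u1] (X k)))
      + lin_prod [u1, u1] (X l) * ((norm (X k))\<^sup>2 * lin_prod [u1, u1] (X k)))"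
    by (simp add: fun_eq_iff proj_form_def lin_prod_Cons lin_prod_Nil power2_norm_eq_inner
        inner_commute algebra_simps)
  then show ?thesis
    by (simp add: has_bochner_integral_add has_bochner_integral_mult_right
        has_bochner_integral_lin_prod_sqnorm_two_rows lk)
qed

lemma has_bochner_integral_quartic_three_rows:
  assumes lk: "l < L" "k < L" "k' < L" "l \<noteq> k" "l \<noteq> k'" "k \<noteq> k'"
  shows "has_bochner_integral P (\<lambda>X. q (X l) (X k) * q (X l) (X k') * (X k \<bullet> X k'))
    (M [u0, u0] * M [S u0, u0] + M [u0, u1] * M [S u1, u0] + M [u1, u0] * M [S u0, u1]
      + M [u1, u1] * M [S u1, u1])"
proof -
  have "(\<lambda>X. q (X l) (X k) * q (X l) (X k') * (X k \<bullet> X k')) = (\<lambda>X. \<Sum>b\<in>Basis.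
        lin_prod [u0, u0] (X l) * lin_prod [b, u0] (X k) * lin_prod [b, u0] (X k')
      + lin_prod [u0, u1] (X l) * lin_prod [b, u0] (X k) * lin_prod [b, u1] (X k')
      + lin_prod [u1, u0] (X l) * lin_prod [b, u1] (X k) * lin_prod [b, u0] (X k')
      + lin_prod [u1, u1] (X l) * lin_prod [b, u1] (X k) * lin_prod [b, u1] (X k'))"
    by (simp add: fun_eq_iff inner_eq_sum_Basis[of "X k" "X k'" for X] sum_distrib_left sum.distrib
        proj_form_def lin_prod_Cons lin_prod_Nil inner_commute algebra_simps)
  moreover have "has_bochner_integral P (\<lambda>X. \<Sum>b\<in>Basis.
        lin_prod [u0, u0] (X l) * lin_prod [b, u0] (X k) * lin_prod [b, u0] (X k')
      + lin_prod [u0, u1] (X l) * lin_prod [b, u0] (X k) * lin_prod [b, u1] (X k')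
      + lin_prod [u1, u0] (X l) * lin_prod [b, u1] (X k) * lin_prod [b, u0] (X k')
      + lin_prod [u1, u1] (X l) * lin_prod [b, u1] (X k) * lin_prod [b, u1] (X k'))
      (\<Sum>b\<in>Basis. M [u0, u0] * M [b, u0] * M [b, u0] + M [u0, u1] * M [b, u0] * M [b, u1]
        + M [u1, u0] * M [b, u1] * M [b, u0] + M [u1, u1] * M [b, u1] * M [b, u1])"
    by (intro has_bochner_integral_sum has_bochner_integral_add
        has_bochner_integral_lin_prod_three_rows lk)
  moreover have "(\<Sum>b\<in>Basis. M [b, w] * M [b, u]) = M [S u, w]" for w u
    using sum_Basis_mixture_moment_pair[OF s, where ws="[w]" and u=u] by simp
  ultimately show ?thesis
    by (simp add: sum.distrib mult.assoc sum_distrib_left[symmetric])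
qed

end

lemma sum_lessThan_one_distinguished:
  assumes l: "l < L" and G: "\<And>k. k < L \<Longrightarrow> k \<noteq> l \<Longrightarrow> G k = e"
  shows "(\<Sum>k<L. G k) = G l + (real L - 1) * (e::real)"
proof -
  have "(\<Sum>k<L. G k) = G l + (\<Sum>k\<in>{..<L}-{l}. G k)"
    using l by (simp add: sum.remove)
  also have "(\<Sum>k\<in>{..<L}-{l}. G k) = (\<Sum>k\<in>{..<L}-{l}. e)"
    using G by (intro sum.cong) auto
  finally show ?thesis
    using l by (simp add: of_nat_diff)
qed

lemma double_sum_lessThan_one_distinguished:
  assumes l: "l < L"
    and row: "\<And>k'. k' < L \<Longrightarrow> k' \<noteq> l \<Longrightarrow> G l k' = e\<^sub>r"
    and column: "\<And>k. k < L \<Longrightarrow> k \<noteq> l \<Longrightarrow> G k l = e\<^sub>c"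
    and diagonal: "\<And>k. k < L \<Longrightarrow> k \<noteq> l \<Longrightarrow> G k k = e\<^sub>d"
    and rest: "\<And>k k'. k < L \<Longrightarrow> k' < L \<Longrightarrow> k \<noteq> l \<Longrightarrow> k' \<noteq> l \<Longrightarrow> k \<noteq> k' \<Longrightarrow> G k k' = e"
  shows "(\<Sum>k<L. \<Sum>k'<L. G k k')
    = G l l + (real L - 1) * (e\<^sub>r + e\<^sub>c + e\<^sub>d) + (real L - 1) * (real L - 2) * (e::real)"
proof -
  have inner: "(\<Sum>k'<L. G k k') = e\<^sub>c + e\<^sub>d + (real L - 2) * e" if k: "k < L" "k \<noteq> l" for k
  proof -
    have "(\<Sum>k'<L. G k k') = G k l + (\<Sum>k'\<in>{..<L}-{l}. G k k')"
      using l by (intro sum.remove) auto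
    also have "(\<Sum>k'\<in>{..<L}-{l}. G k k') = G k k + (\<Sum>k'\<in>{..<L}-{l}-{k}. G k k')"
      using k by (intro sum.remove) auto
    also have "(\<Sum>k'\<in>{..<L}-{l}-{k}. G k k') = (\<Sum>k'\<in>{..<L}-{l}-{k}. e)"
      using rest k by (intro sum.cong) auto
    also have "\<dots> = (real L - 2) * e"
      using k l by (simp add: card_Diff_subset of_nat_diff)
    finally show ?thesis
      using column diagonal k by simp
  qed
  have "(\<Sum>k<L. \<Sum>k'<L. G k k') = (\<Sum>k'<L. G l k') + (\<Sum>k\<in>{..<L}-{l}. \<Sum>k'<L. G k k')"
    using l by (intro sum.remove) auto
  also have "(\<Sum>k'<L. G l k') = G l l + (real L - 1) * e\<^sub>r"
    by (rule sum_lessThan_one_distinguished[OF l row])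
  also have "(\<Sum>k\<in>{..<L}-{l}. \<Sum>k'<L. G k k') = (\<Sum>k\<in>{..<L}-{l}. e\<^sub>c + e\<^sub>d + (real L - 2) * e)"
    using inner by (intro sum.cong) auto
  also have "\<dots> = (real L - 1) * (e\<^sub>c + e\<^sub>d + (real L - 2) * e)"
    using l by (simp add: of_nat_diff)
  finally show ?thesis
    by (simp add: algebra_simps)
qed

lemma power2_norm_diff_attention:
  fixes a :: "real^'d" and X :: "nat \<Rightarrow> real^'d"
  shows "(norm (a - (2 / real L) *\<^sub>R (\<Sum>k<L. (lam * proj_form u0 u1 a (X k)) *\<^sub>R X k)))\<^sup>2
    = a \<bullet> a - (4 * lam / real L) * (\<Sum>k<L. proj_form u0 u1 a (X k) * (a \<bullet> X k))
      + (4 * lam\<^sup>2 / (real L)\<^sup>2)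
        * (\<Sum>k<L. \<Sum>k'<L. proj_form u0 u1 a (X k) * proj_form u0 u1 a (X k') * (X k \<bullet> X k'))"
proof -
  define T where "T = (\<Sum>k<L. (lam * proj_form u0 u1 a (X k)) *\<^sub>R X k)"
  have aT: "a \<bullet> T = lam * (\<Sum>k<L. proj_form u0 u1 a (X k) * (a \<bullet> X k))"
    unfolding T_def by (simp add: inner_sum_right sum_distrib_left algebra_simps)
  have TT: "T \<bullet> T = lam\<^sup>2 * (\<Sum>k<L. \<Sum>k'<L. proj_form u0 u1 a (X k) * proj_form u0 u1 a (X k') * (X k \<bullet> X k'))"
    unfolding T_def inner_sum_left
    by (simp add: inner_sum_right sum_distrib_left power2_eq_square algebra_simps)
  have "(norm (a - (2 / real L) *\<^sub>R T))\<^sup>2 = a \<bullet> a - 2 * (2 / real L) * (a \<bullet> T) + (2 / real L)\<^sup>2 * (T \<bullet> T)"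
    unfolding power2_norm_eq_inner
    by (simp add: inner_diff_left inner_diff_right inner_commute power2_eq_square algebra_simps)
  then show ?thesis
    unfolding T_def[symmetric] aT TT by (simp add: power2_eq_square algebra_simps)
qed

text \<open>The factors \<open>LL - 1\<close> and \<open>(LL - 1) * (LL - 2)\<close> count the other rows and the ordered
  pairs of distinct other rows.\<close>

definition row_risk :: "real \<Rightarrow> real \<Rightarrow> real \<Rightarrow> real^'d \<Rightarrow> real^'d \<Rightarrow> real^'d \<Rightarrow> real^'d \<Rightarrow> real" where
  "row_risk LL lam s m0 m1 u0 u1 =
    (let M = mixture_moment s m0 m1; N = mixture_sqnorm_moment s m0 m1; S = mixture_second_moment s m0 m1 in
     N [] - (4 * lam / LL) * ((N [u0, u0] + N [u1, u1]) + (LL - 1) * (M [S u0, u0] + M [S u1, u1]))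
     + (4 * lam\<^sup>2 / LL\<^sup>2) *
       ((N [u0, u0, u0, u0] + 2 * N [u0, u0, u1, u1] + N [u1, u1, u1, u1])
        + (LL - 1) * (2 * (M [S u0, u0, u0, u0] + M [S u0, u1, u1, u0] + M [S u1, u0, u0, u1]
                           + M [S u1, u1, u1, u1])
                      + (M [u0, u0] * N [u0, u0] + 2 * (M [u0, u1] * N [u0, u1]) + M [u1, u1] * N [u1, u1]))
        + (LL - 1) * (LL - 2) * (M [u0, u0] * M [S u0, u0] + M [u0, u1] * M [S u1, u0]
                                 + M [u1, u0] * M [S u0, u1] + M [u1, u1] * M [S u1, u1])))"

context mixture_rows
begin

definition quadratic_moment :: "nat \<Rightarrow> nat \<Rightarrow> real" where
  "quadratic_moment l k = (if k = l then N [u0, u0] + N [u1, u1] else M [S u0, u0] + M [S u1, u1])"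

definition quartic_moment :: "nat \<Rightarrow> nat \<Rightarrow> nat \<Rightarrow> real" where
  "quartic_moment l k k' =
    (if k = l \<and> k' = l then N [u0, u0, u0, u0] + 2 * N [u0, u0, u1, u1] + N [u1, u1, u1, u1]
     else if k = l \<or> k' = l then
       M [S u0, u0, u0, u0] + M [S u0, u1, u1, u0] + M [S u1, u0, u0, u1] + M [S u1, u1, u1, u1]
     else if k = k' then M [u0, u0] * N [u0, u0] + 2 * (M [u0, u1] * N [u0, u1]) + M [u1, u1] * N [u1, u1]
     else M [u0, u0] * M [S u0, u0] + M [u0, u1] * M [S u1, u0] + M [u1, u0] * M [S u0, u1]
       + M [u1, u1] * M [S u1, u1])"

lemma has_bochner_integral_quadratic_term:
  assumes "l < L" "k < L"
  shows "has_bochner_integral P (\<lambda>X. q (X l) (X k) * (X l \<bullet> X k)) (quadratic_moment l k)"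
  using has_bochner_integral_quadratic_same_row[of l] has_bochner_integral_quadratic_two_rows[of l k] assms
  by (cases "k = l") (simp_all add: quadratic_moment_def)

lemma has_bochner_integral_quartic_term:
  assumes l: "l < L" and k: "k < L" "k' < L"
  shows "has_bochner_integral P (\<lambda>X. q (X l) (X k) * q (X l) (X k') * (X k \<bullet> X k')) (quartic_moment l k k')"
proof -
  consider "k = l" "k' = l" | "k = l" "k' \<noteq> l" | "k \<noteq> l" "k' = l" | "k \<noteq> l" "k' \<noteq> l" "k = k'"
    | "k \<noteq> l" "k' \<noteq> l" "k \<noteq> k'" by blast
  then show ?thesis
  proof cases
    case 1
    then show ?thesis using has_bochner_integral_quartic_same_row[OF l]
      by (simp add: quartic_moment_def)
  next
    case 2
    then show ?thesis using has_bochner_integral_quartic_two_rows_outer[OF l k(2)]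
      by (simp add: quartic_moment_def)
  next
    case 3
    have "(\<lambda>X. q (X l) (X k) * q (X l) (X l) * (X k \<bullet> X l)) = (\<lambda>X. q (X l) (X l) * q (X l) (X k) * (X l \<bullet> X k))"
      by (simp add: fun_eq_iff inner_commute mult_ac)
    with 3 show ?thesis using has_bochner_integral_quartic_two_rows_outer[OF l k(1)]
      by (simp add: quartic_moment_def)
  next
    case 4
    then show ?thesis using has_bochner_integral_quartic_two_rows_inner[OF l k(1)]
      by (simp add: quartic_moment_def)
  next
    case 5
    then show ?thesis using has_bochner_integral_quartic_three_rows[OF l k]
      by (simp add: quartic_moment_def)
  qed
qed

lemma has_bochner_integral_row_loss:
  assumes l: "l < L"
  shows "has_bochner_integral P (\<lambda>X. (norm (X l - Tlin L lam u0 u1 X l))\<^sup>2) (row_risk L lam s m0 m1 u0 u1)"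
proof -
  have "has_bochner_integral P (\<lambda>X. X l \<bullet> X l - (4 * lam / real L) * (\<Sum>k<L. q (X l) (X k) * (X l \<bullet> X k))
      + (4 * lam\<^sup>2 / (real L)\<^sup>2) * (\<Sum>k<L. \<Sum>k'<L. q (X l) (X k) * q (X l) (X k') * (X k \<bullet> X k')))
    (N [] - (4 * lam / real L) * (\<Sum>k<L. quadratic_moment l k)
      + (4 * lam\<^sup>2 / (real L)\<^sup>2) * (\<Sum>k<L. \<Sum>k'<L. quartic_moment l k k'))"
    using has_bochner_integral_row_sqnorm_lin_prod[OF l, where vs="[]"]
    by (intro has_bochner_integral_add has_bochner_integral_diff has_bochner_integral_mult_right
        has_bochner_integral_sum has_bochner_integral_quadratic_term has_bochner_integral_quartic_term l)
      (auto simp: lin_prod_Nil power2_norm_eq_inner)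
  moreover have "(norm (X l - Tlin L lam u0 u1 X l))\<^sup>2 = X l \<bullet> X l
      - (4 * lam / real L) * (\<Sum>k<L. q (X l) (X k) * (X l \<bullet> X k))
      + (4 * lam\<^sup>2 / (real L)\<^sup>2) * (\<Sum>k<L. \<Sum>k'<L. q (X l) (X k) * q (X l) (X k') * (X k \<bullet> X k'))" for X
    using power2_norm_diff_attention[of "X l" L lam u0 u1 X] by (simp add: Tlin_def proj_form_def)
  moreover have "row_risk L lam s m0 m1 u0 u1 = N [] - (4 * lam / real L) * (\<Sum>k<L. quadratic_moment l k)
      + (4 * lam\<^sup>2 / (real L)\<^sup>2) * (\<Sum>k<L. \<Sum>k'<L. quartic_moment l k k')"
  proof -
    have "(\<Sum>k<L. quadratic_moment l k) = quadratic_moment l l + (real L - 1) * (M [S u0, u0] + M [S u1, u1])"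
      by (rule sum_lessThan_one_distinguished[OF l]) (simp add: quadratic_moment_def)
    moreover have "(\<Sum>k<L. \<Sum>k'<L. quartic_moment l k k') = quartic_moment l l l
      + (real L - 1) * (2 * (M [S u0, u0, u0, u0] + M [S u0, u1, u1, u0] + M [S u1, u0, u0, u1]
                             + M [S u1, u1, u1, u1])
                        + (M [u0, u0] * N [u0, u0] + 2 * (M [u0, u1] * N [u0, u1]) + M [u1, u1] * N [u1, u1]))
      + (real L - 1) * (real L - 2) * (M [u0, u0] * M [S u0, u0] + M [u0, u1] * M [S u1, u0]
                                       + M [u1, u0] * M [S u0, u1] + M [u1, u1] * M [S u1, u1])"
      unfolding mult_2 by (rule double_sum_lessThan_one_distinguished[OF l]) (simp_all add: quartic_moment_def)
    ultimately show ?thesis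
      by (simp only: row_risk_def Let_def) (simp add: quadratic_moment_def quartic_moment_def)
  qed
  ultimately show ?thesis
    by simp
qed

end

lemma risk_eq_row_risk:
  assumes s: "s > 0" and L: "L \<ge> 1"
  shows "risk L lam s m0 m1 u0 u1 = row_risk L lam s m0 m1 u0 u1"
proof -
  interpret mixture_rows L s m0 m1 u0 u1
    using s by unfold_locales
  have "(\<Sum>l<L. integral\<^sup>L (data_law L s m0 m1) (\<lambda>X. (norm (X l - Tlin L lam u0 u1 X l))\<^sup>2))
      = (\<Sum>l<L. row_risk L lam s m0 m1 u0 u1)"
    by (intro sum.cong refl has_bochner_integral_integral_eq has_bochner_integral_row_loss) simp
  then show ?thesis
    using L by (simp add: risk_def)
qed

section \<open>The risk for orthonormal targets\<close>

lemma mixture_sqnorm_moment_Nil: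
  fixes m0 m1 :: "real^'d"
  assumes s: "s > 0" and "m0 \<bullet> m0 = 1" "m1 \<bullet> m1 = 1"
  shows "mixture_sqnorm_moment s m0 m1 [] = 1 + s\<^sup>2 * CARD('d)"
  unfolding mixture_sqnorm_moment_def gaussian_sqnorm_moment_eq[OF s]
  using assms by (simp add: gaussian_moment_1 algebra_simps)

text \<open>The two polynomials below are \<open>row_risk\<close> expanded by Wick's formula when \<open>m0, m1\<close> are
  orthonormal and \<open>u1\<close> is a unit vector orthogonal to \<open>m0\<close>, as functions of \<open>d = CARD('d)\<close>,
  \<open>k1 = u1 \<bullet> m1\<close> and of \<open>a = u \<bullet> u\<close>, \<open>b = u \<bullet> m0\<close>, \<open>c = u \<bullet> m1\<close>, \<open>e = u \<bullet> u1\<close>.\<close>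

definition cross_term_poly :: "real \<Rightarrow> real \<Rightarrow> real \<Rightarrow> real \<Rightarrow> real \<Rightarrow> real \<Rightarrow> real \<Rightarrow> real \<Rightarrow> real" where
  "cross_term_poly d LL s k1 a b c e = s ^ 2
      + s ^ 4
      + s ^ 4 * d
      + s ^ 4 * LL
      + (1 / 4) * k1 ^ 2
      + (1 / 4) * k1 ^ 2 * LL
      + k1 ^ 2 * s ^ 2
      + (1 / 2) * k1 ^ 2 * s ^ 2 * d
      + k1 ^ 2 * s ^ 2 * LL
      + (1 / 4) * c ^ 2
      + (1 / 4) * c ^ 2 * LL
      + c ^ 2 * s ^ 2
      + (1 / 2) * c ^ 2 * s ^ 2 * d
      + c ^ 2 * s ^ 2 * LL
      + (1 / 4) * b ^ 2
      + (1 / 4) * b ^ 2 * LL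
      + b ^ 2 * s ^ 2
      + (1 / 2) * b ^ 2 * s ^ 2 * d
      + b ^ 2 * s ^ 2 * LL
      + a * s ^ 2
      + a * s ^ 4
      + a * s ^ 4 * d
      + a * s ^ 4 * LL"

definition square_term_poly :: "real \<Rightarrow> real \<Rightarrow> real \<Rightarrow> real \<Rightarrow> real \<Rightarrow> real \<Rightarrow> real \<Rightarrow> real \<Rightarrow> real" where
  "square_term_poly d LL s k1 a b c e = 2 * s ^ 4
      + s ^ 4 * LL
      + 6 * s ^ 6
      + 2 * s ^ 6 * d
      + 5 * s ^ 6 * LL
      + s ^ 6 * LL * d
      + s ^ 6 * LL ^ 2
      + k1 ^ 2 * s ^ 2
      + (7 / 4) * k1 ^ 2 * s ^ 2 * LL
      + (1 / 4) * k1 ^ 2 * s ^ 2 * LL ^ 2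
      + 9 * k1 ^ 2 * s ^ 4
      + 2 * k1 ^ 2 * s ^ 4 * d
      + (15 / 2) * k1 ^ 2 * s ^ 4 * LL
      + k1 ^ 2 * s ^ 4 * LL * d
      + (3 / 2) * k1 ^ 2 * s ^ 4 * LL ^ 2
      + (3 / 8) * k1 ^ 4 * LL
      + (1 / 8) * k1 ^ 4 * LL ^ 2
      + (3 / 2) * k1 ^ 4 * s ^ 2
      + (1 / 4) * k1 ^ 4 * s ^ 2 * d
      + 2 * k1 ^ 4 * s ^ 2 * LL
      + (1 / 4) * k1 ^ 4 * s ^ 2 * LL * d
      + (1 / 2) * k1 ^ 4 * s ^ 2 * LL ^ 2
      + 2 * e ^ 2 * s ^ 4
      + 2 * e ^ 2 * s ^ 4 * LL
      + 8 * e ^ 2 * s ^ 6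
      + 2 * e ^ 2 * s ^ 6 * d
      + 6 * e ^ 2 * s ^ 6 * LL
      + 2 * e ^ 2 * s ^ 6 * LL * d
      + 2 * e ^ 2 * s ^ 6 * LL ^ 2
      + c * e * k1 * s ^ 2
      + (5 / 2) * c * e * k1 * s ^ 2 * LL
      + (1 / 2) * c * e * k1 * s ^ 2 * LL ^ 2
      + 12 * c * e * k1 * s ^ 4
      + 2 * c * e * k1 * s ^ 4 * d
      + 9 * c * e * k1 * s ^ 4 * LL
      + 2 * c * e * k1 * s ^ 4 * LL * d
      + 3 * c * e * k1 * s ^ 4 * LL ^ 2
      + (1 / 2) * c ^ 2 * s ^ 2
      + (1 / 2) * c ^ 2 * s ^ 2 * LL
      + 3 * c ^ 2 * s ^ 4
      + c ^ 2 * s ^ 4 * d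
      + 3 * c ^ 2 * s ^ 4 * LL
      + (3 / 4) * c ^ 2 * k1 ^ 2 * LL
      + (1 / 4) * c ^ 2 * k1 ^ 2 * LL ^ 2
      + 3 * c ^ 2 * k1 ^ 2 * s ^ 2
      + (1 / 2) * c ^ 2 * k1 ^ 2 * s ^ 2 * d
      + 4 * c ^ 2 * k1 ^ 2 * s ^ 2 * LL
      + (1 / 2) * c ^ 2 * k1 ^ 2 * s ^ 2 * LL * d
      + c ^ 2 * k1 ^ 2 * s ^ 2 * LL ^ 2
      + (3 / 8) * c ^ 4 * LL
      + (1 / 8) * c ^ 4 * LL ^ 2
      + (3 / 2) * c ^ 4 * s ^ 2
      + (1 / 4) * c ^ 4 * s ^ 2 * d
      + 2 * c ^ 4 * s ^ 2 * LL
      + (1 / 4) * c ^ 4 * s ^ 2 * LL * d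
      + (1 / 2) * c ^ 4 * s ^ 2 * LL ^ 2
      + (1 / 2) * b ^ 2 * s ^ 2
      + (1 / 2) * b ^ 2 * s ^ 2 * LL
      + 3 * b ^ 2 * s ^ 4
      + b ^ 2 * s ^ 4 * d
      + 3 * b ^ 2 * s ^ 4 * LL
      - b ^ 2 * k1 ^ 2 * s ^ 2
      + b ^ 2 * k1 ^ 2 * s ^ 2 * LL
      - (1 / 4) * b ^ 2 * c ^ 2 * LL
      + (1 / 4) * b ^ 2 * c ^ 2 * LL ^ 2
      - 3 * b ^ 2 * c ^ 2 * s ^ 2
      - (1 / 2) * b ^ 2 * c ^ 2 * s ^ 2 * d
      + 2 * b ^ 2 * c ^ 2 * s ^ 2 * LL
      + (1 / 2) * b ^ 2 * c ^ 2 * s ^ 2 * LL * d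
      + b ^ 2 * c ^ 2 * s ^ 2 * LL ^ 2
      + (3 / 8) * b ^ 4 * LL
      + (1 / 8) * b ^ 4 * LL ^ 2
      + (3 / 2) * b ^ 4 * s ^ 2
      + (1 / 4) * b ^ 4 * s ^ 2 * d
      + 2 * b ^ 4 * s ^ 2 * LL
      + (1 / 4) * b ^ 4 * s ^ 2 * LL * d
      + (1 / 2) * b ^ 4 * s ^ 2 * LL ^ 2
      + 2 * a * s ^ 4
      + 4 * a * s ^ 6
      + 2 * a * s ^ 6 * d
      + 4 * a * s ^ 6 * LL
      + (1 / 2) * a * k1 ^ 2 * s ^ 2
      + (1 / 2) * a * k1 ^ 2 * s ^ 2 * LL
      + 3 * a * k1 ^ 2 * s ^ 4
      + a * k1 ^ 2 * s ^ 4 * d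
      + 3 * a * k1 ^ 2 * s ^ 4 * LL
      + a * c ^ 2 * s ^ 2
      + (7 / 4) * a * c ^ 2 * s ^ 2 * LL
      + (1 / 4) * a * c ^ 2 * s ^ 2 * LL ^ 2
      + 9 * a * c ^ 2 * s ^ 4
      + 2 * a * c ^ 2 * s ^ 4 * d
      + (15 / 2) * a * c ^ 2 * s ^ 4 * LL
      + a * c ^ 2 * s ^ 4 * LL * d
      + (3 / 2) * a * c ^ 2 * s ^ 4 * LL ^ 2
      + a * b ^ 2 * s ^ 2
      + (7 / 4) * a * b ^ 2 * s ^ 2 * LL
      + (1 / 4) * a * b ^ 2 * s ^ 2 * LL ^ 2
      + 9 * a * b ^ 2 * s ^ 4
      + 2 * a * b ^ 2 * s ^ 4 * d
      + (15 / 2) * a * b ^ 2 * s ^ 4 * LL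
      + a * b ^ 2 * s ^ 4 * LL * d
      + (3 / 2) * a * b ^ 2 * s ^ 4 * LL ^ 2
      + 2 * a ^ 2 * s ^ 4
      + a ^ 2 * s ^ 4 * LL
      + 6 * a ^ 2 * s ^ 6
      + 2 * a ^ 2 * s ^ 6 * d
      + 5 * a ^ 2 * s ^ 6 * LL
      + a ^ 2 * s ^ 6 * LL * d
      + a ^ 2 * s ^ 6 * LL ^ 2"

context
  fixes m0 m1 u1 :: "real^'d" and s :: real
  assumes s: "s > 0" and m0: "m0 \<bullet> m0 = 1" and m1: "m1 \<bullet> m1 = 1" and m0_m1: "m0 \<bullet> m1 = 0"
    and u1: "u1 \<bullet> u1 = 1" and u1_m0: "u1 \<bullet> m0 = 0"
begin

lemma cross_terms_eq_poly:
  "(mixture_sqnorm_moment s m0 m1 [u, u] + mixture_sqnorm_moment s m0 m1 [u1, u1])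
     + (LL - 1) * (mixture_moment s m0 m1 [mixture_second_moment s m0 m1 u, u]
                    + mixture_moment s m0 m1 [mixture_second_moment s m0 m1 u1, u1])
   = cross_term_poly CARD('d) LL s (u1 \<bullet> m1) (u \<bullet> u) (u \<bullet> m0) (u \<bullet> m1) (u \<bullet> u1)"
  unfolding mixture_moment_def mixture_sqnorm_moment_def gaussian_sqnorm_moment_eq[OF s]
  using m0 m1 m0_m1 u1 u1_m0 m0_m1[unfolded inner_commute[of m0]] u1_m0[unfolded inner_commute[of u1]]
  by (simp add: numeral_eq_Suc gaussian_moment_1[OF s] gaussian_moment_2[OF s] gaussian_moment_3[OF s]
      gaussian_moment_4[OF s] gaussian_moment_5[OF s] mixture_second_moment_def cross_term_poly_def inner_add_left inner_add_right
      inner_commute field_simps power2_eq_square)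

lemma square_terms_eq_poly:
  defines "M \<equiv> mixture_moment s m0 m1" and "N \<equiv> mixture_sqnorm_moment s m0 m1"
    and "S \<equiv> mixture_second_moment s m0 m1"
  shows "(N [u, u, u, u] + 2 * N [u, u, u1, u1] + N [u1, u1, u1, u1])
     + (LL - 1) * (2 * (M [S u, u, u, u] + M [S u, u1, u1, u] + M [S u1, u, u, u1] + M [S u1, u1, u1, u1])
                   + (M [u, u] * N [u, u] + 2 * (M [u, u1] * N [u, u1]) + M [u1, u1] * N [u1, u1]))
     + (LL - 1) * (LL - 2) * (M [u, u] * M [S u, u] + M [u, u1] * M [S u1, u] + M [u1, u] * M [S u, u1]
                              + M [u1, u1] * M [S u1, u1])
   = square_term_poly CARD('d) LL s (u1 \<bullet> m1) (u \<bullet> u) (u \<bullet> m0) (u \<bullet> m1) (u \<bullet> u1)"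
  unfolding M_def N_def S_def mixture_moment_def mixture_sqnorm_moment_def gaussian_sqnorm_moment_eq[OF s]
  using m0 m1 m0_m1 u1 u1_m0 m0_m1[unfolded inner_commute[of m0]] u1_m0[unfolded inner_commute[of u1]]
  by (simp add: numeral_eq_Suc gaussian_moment_1[OF s] gaussian_moment_2[OF s] gaussian_moment_3[OF s]
      gaussian_moment_4[OF s] gaussian_moment_5[OF s] mixture_second_moment_def square_term_poly_def inner_add_left inner_add_right
      inner_commute field_simps power2_eq_square)

lemma row_risk_eq_poly:
  "row_risk LL lam s m0 m1 u u1 = 1 + s\<^sup>2 * CARD('d)
     - (4 * lam / LL) * cross_term_poly CARD('d) LL s (u1 \<bullet> m1) (u \<bullet> u) (u \<bullet> m0) (u \<bullet> m1) (u \<bullet> u1)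
     + (4 * lam\<^sup>2 / LL\<^sup>2) * square_term_poly CARD('d) LL s (u1 \<bullet> m1) (u \<bullet> u) (u \<bullet> m0) (u \<bullet> m1) (u \<bullet> u1)"
  unfolding row_risk_def Let_def mixture_sqnorm_moment_Nil[OF s m0 m1] cross_terms_eq_poly[symmetric]
    square_terms_eq_poly[symmetric] ..

end

section \<open>The gradient and the projected step\<close>

text \<open>Partial derivatives of the two polynomials in \<open>a\<close> and \<open>b\<close>, at \<open>a = 1\<close> and \<open>c = e = 0\<close>.\<close>

definition cross_term_poly_deriv_a :: "real \<Rightarrow> real \<Rightarrow> real \<Rightarrow> real \<Rightarrow> real \<Rightarrow> real" where
  "cross_term_poly_deriv_a d LL s k1 b = s ^ 2 + s ^ 4 + s ^ 4 * d + s ^ 4 * LL"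

definition cross_term_poly_deriv_b :: "real \<Rightarrow> real \<Rightarrow> real \<Rightarrow> real \<Rightarrow> real \<Rightarrow> real" where
  "cross_term_poly_deriv_b d LL s k1 b =
     (1 / 2) * b + (1 / 2) * b * LL + 2 * b * s ^ 2 + b * s ^ 2 * d + 2 * b * s ^ 2 * LL"

definition square_term_poly_deriv_a :: "real \<Rightarrow> real \<Rightarrow> real \<Rightarrow> real \<Rightarrow> real \<Rightarrow> real" where
  "square_term_poly_deriv_a d LL s k1 b =
     6 * s ^ 4 + 2 * s ^ 4 * LL + 16 * s ^ 6 + 6 * s ^ 6 * d + 14 * s ^ 6 * LL + 2 * s ^ 6 * LL * d
     + 2 * s ^ 6 * LL ^ 2 + (1 / 2) * k1 ^ 2 * s ^ 2 + (1 / 2) * k1 ^ 2 * s ^ 2 * LL + 3 * k1 ^ 2 * s ^ 4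
     + k1 ^ 2 * s ^ 4 * d + 3 * k1 ^ 2 * s ^ 4 * LL + b ^ 2 * s ^ 2 + (7 / 4) * b ^ 2 * s ^ 2 * LL
     + (1 / 4) * b ^ 2 * s ^ 2 * LL ^ 2 + 9 * b ^ 2 * s ^ 4 + 2 * b ^ 2 * s ^ 4 * d
     + (15 / 2) * b ^ 2 * s ^ 4 * LL + b ^ 2 * s ^ 4 * LL * d + (3 / 2) * b ^ 2 * s ^ 4 * LL ^ 2"

definition square_term_poly_deriv_b :: "real \<Rightarrow> real \<Rightarrow> real \<Rightarrow> real \<Rightarrow> real \<Rightarrow> real" where
  "square_term_poly_deriv_b d LL s k1 b =
     3 * b * s ^ 2 + (9 / 2) * b * s ^ 2 * LL + (1 / 2) * b * s ^ 2 * LL ^ 2 + 24 * b * s ^ 4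
     + 6 * b * s ^ 4 * d + 21 * b * s ^ 4 * LL + 2 * b * s ^ 4 * LL * d + 3 * b * s ^ 4 * LL ^ 2
     - 2 * b * k1 ^ 2 * s ^ 2 + 2 * b * k1 ^ 2 * s ^ 2 * LL + (3 / 2) * b ^ 3 * LL + (1 / 2) * b ^ 3 * LL ^ 2
     + 6 * b ^ 3 * s ^ 2 + b ^ 3 * s ^ 2 * d + 8 * b ^ 3 * s ^ 2 * LL + b ^ 3 * s ^ 2 * LL * d
     + 2 * b ^ 3 * s ^ 2 * LL ^ 2"

context
  fixes m0 m1 u0 u1 :: "real^'d"
  assumes u0: "u0 \<bullet> u0 = 1" and u0_m1: "u0 \<bullet> m1 = 0" and u0_u1: "u0 \<bullet> u1 = 0"
begin

lemma has_derivative_cross_term_poly: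
  "((\<lambda>u. cross_term_poly d LL s k1 (u \<bullet> u) (u \<bullet> m0) (u \<bullet> m1) (u \<bullet> u1)) has_derivative
     (\<lambda>h. cross_term_poly_deriv_a d LL s k1 (u0 \<bullet> m0) * (2 * (h \<bullet> u0))
        + cross_term_poly_deriv_b d LL s k1 (u0 \<bullet> m0) * (h \<bullet> m0))) (at u0)"
  unfolding cross_term_poly_def
  apply (rule derivative_eq_intros | simp)+
  apply (rule ext)
  using u0 u0_m1 u0_u1
  by (simp add: cross_term_poly_deriv_a_def cross_term_poly_deriv_b_def inner_commute algebra_simps)

lemma has_derivative_square_term_poly:
  "((\<lambda>u. square_term_poly d LL s k1 (u \<bullet> u) (u \<bullet> m0) (u \<bullet> m1) (u \<bullet> u1)) has_derivative
     (\<lambda>h. square_term_poly_deriv_a d LL s k1 (u0 \<bullet> m0) * (2 * (h \<bullet> u0))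
        + square_term_poly_deriv_b d LL s k1 (u0 \<bullet> m0) * (h \<bullet> m0))) (at u0)"
  unfolding square_term_poly_def
  apply (rule derivative_eq_intros | simp)+
  apply (rule ext)
  using u0 u0_m1 u0_u1
  by (simp add: square_term_poly_deriv_a_def square_term_poly_deriv_b_def inner_commute algebra_simps)

lemma gderiv_risk_poly:
  "GDERIV (\<lambda>u. r - p * cross_term_poly d LL s k1 (u \<bullet> u) (u \<bullet> m0) (u \<bullet> m1) (u \<bullet> u1)
                 + q * square_term_poly d LL s k1 (u \<bullet> u) (u \<bullet> m0) (u \<bullet> m1) (u \<bullet> u1)) u0 :>
   ((2 * (- p * cross_term_poly_deriv_a d LL s k1 (u0 \<bullet> m0)
          + q * square_term_poly_deriv_a d LL s k1 (u0 \<bullet> m0))) *\<^sub>R u0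
    + (- p * cross_term_poly_deriv_b d LL s k1 (u0 \<bullet> m0)
       + q * square_term_poly_deriv_b d LL s k1 (u0 \<bullet> m0)) *\<^sub>R m0)"
  unfolding gderiv_def
  apply (rule derivative_eq_intros has_derivative_cross_term_poly has_derivative_square_term_poly | simp)+
  apply (rule ext)
  by (simp add: inner_add_right algebra_simps)

end

lemma grad_eqI:
  fixes f :: "'a::real_inner \<Rightarrow> real"
  assumes "GDERIV f x :> D"
  shows "grad f x = D"
proof -
  have "GDERIV f x :> grad f x"
    unfolding grad_def using assms by (rule someI)
  then have "(\<lambda>h. h \<bullet> grad f x) = (\<lambda>h. h \<bullet> D)"
    using assms unfolding gderiv_def by (rule has_derivative_unique)
  then have "(grad f x - D) \<bullet> (grad f x - D) = 0"
    by (metis inner_diff_right right_minus_eq)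
  then show ?thesis by simp
qed

lemma deriv_risk_lt:
  "deriv (\<lambda>t. risk_lt d LL lam s t k1) k0
     = 4 * coefA d LL lam s * k0 ^ 3 + 2 * coefB d LL lam s * k0 + 2 * coefC d LL lam s * k0 * k1\<^sup>2"
  unfolding risk_lt_def by (rule DERIV_imp_deriv) (rule derivative_eq_intros | simp)+

lemma risk_lt_commute: "risk_lt d LL lam s a b = risk_lt d LL lam s b a"
  unfolding risk_lt_def by (simp add: algebra_simps)

text \<open>This is where the constants \<open>A, B, C\<close> of the reduced risk come from.\<close>

lemma deriv_risk_lt_eq_poly:
  assumes LL: "LL \<noteq> 0"
  shows "- (4 * lam / LL) * cross_term_poly_deriv_b d LL s k1 k0
           + (4 * lam\<^sup>2 / LL\<^sup>2) * square_term_poly_deriv_b d LL s k1 k0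
         = deriv (\<lambda>t. risk_lt d LL lam s t k1) k0"
proof -
  define x where "x = lam / LL"
  have A: "coefA d LL lam s = x\<^sup>2 * (2 * c2 d s 8 + 2 * (LL - 1) * c1 s 5 + (LL - 1) * c2 d s 4
      + (LL - 1) * (LL - 2) / 2 * c1 s 4)"
    using LL by (simp add: x_def coefA_def field_simps power2_eq_square)
  have B: "coefB d LL lam s = x * (- 2 * c2 d s 4 - (LL - 1) * c1 s 4)
      + x\<^sup>2 * (16 * s\<^sup>2 * c2 d s 6 + 8 * s\<^sup>2 * (LL - 1) * c1 s 6 + 4 * s\<^sup>2 * (LL - 1) * c2 d s 3
               + s\<^sup>2 * (LL - 1) * (LL - 2) * c1 s 6)"
    using LL by (simp add: x_def coefB_def field_simps power2_eq_square)
  have C: "coefC d LL lam s = x\<^sup>2 * (4 * s\<^sup>2 * (LL - 1))"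
    using LL by (simp add: x_def coefC_def field_simps power2_eq_square)
  have "4 * lam / LL = 4 * x" "4 * lam\<^sup>2 / LL\<^sup>2 = 4 * x\<^sup>2"
    by (simp_all add: x_def power_divide)
  then show ?thesis
    unfolding deriv_risk_lt A B C
    by (simp add: cross_term_poly_deriv_b_def square_term_poly_deriv_b_def c1_def c2_def
        algebra_simps power2_eq_square power3_eq_cube power4_eq_xxxx) (simp add: field_simps)
qed

lemma risk_swap: "risk L lam s m0 m1 u0 u1 = risk L lam s m1 m0 u1 u0"
proof -
  have "mixture s m0 m1 = mixture s m1 m0"
    unfolding mixture_def by (simp add: add.commute)
  moreover have "Tlin L lam u0 u1 = Tlin L lam u1 u0"
    unfolding Tlin_def by (simp add: add.commute)
  ultimately show ?thesis
    unfolding risk_def data_law_def by simp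
qed

lemma grad_risk:
  fixes m0 m1 u0 u1 :: "real^'d"
  assumes s: "s > 0" and L: "L \<ge> 1"
    and m0: "m0 \<bullet> m0 = 1" and m1: "m1 \<bullet> m1 = 1" and m0_m1: "m0 \<bullet> m1 = 0"
    and u0: "u0 \<bullet> u0 = 1" and u0_m1: "u0 \<bullet> m1 = 0" and u0_u1: "u0 \<bullet> u1 = 0"
    and u1: "u1 \<bullet> u1 = 1" and u1_m0: "u1 \<bullet> m0 = 0"
  shows "\<exists>\<alpha>. grad (\<lambda>u. risk L lam s m0 m1 u u1) u0
    = \<alpha> *\<^sub>R u0 + deriv (\<lambda>t. risk_lt CARD('d) L lam s t (u1 \<bullet> m1)) (u0 \<bullet> m0) *\<^sub>R m0"
proof -
  let ?d = "real CARD('d)" and ?k1 = "u1 \<bullet> m1" and ?p = "4 * lam / L" and ?q = "4 * lam\<^sup>2 / (real L)\<^sup>2"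
  have "(\<lambda>u. risk L lam s m0 m1 u u1) = (\<lambda>u. 1 + s\<^sup>2 * ?d
      - ?p * cross_term_poly ?d L s ?k1 (u \<bullet> u) (u \<bullet> m0) (u \<bullet> m1) (u \<bullet> u1)
      + ?q * square_term_poly ?d L s ?k1 (u \<bullet> u) (u \<bullet> m0) (u \<bullet> m1) (u \<bullet> u1))"
    by (simp add: fun_eq_iff risk_eq_row_risk[OF s L] row_risk_eq_poly[OF s m0 m1 m0_m1 u1 u1_m0])
  then have "grad (\<lambda>u. risk L lam s m0 m1 u u1) u0
      = (2 * (- ?p * cross_term_poly_deriv_a ?d L s ?k1 (u0 \<bullet> m0)
              + ?q * square_term_poly_deriv_a ?d L s ?k1 (u0 \<bullet> m0))) *\<^sub>R u0
        + (- ?p * cross_term_poly_deriv_b ?d L s ?k1 (u0 \<bullet> m0)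
           + ?q * square_term_poly_deriv_b ?d L s ?k1 (u0 \<bullet> m0)) *\<^sub>R m0"
    by (simp only:) (rule grad_eqI[OF gderiv_risk_poly[OF u0 u0_m1 u0_u1]])
  also have "- ?p * cross_term_poly_deriv_b ?d L s ?k1 (u0 \<bullet> m0)
      + ?q * square_term_poly_deriv_b ?d L s ?k1 (u0 \<bullet> m0)
      = deriv (\<lambda>t. risk_lt ?d L lam s t ?k1) (u0 \<bullet> m0)"
    using L by (intro deriv_risk_lt_eq_poly) simp
  finally show ?thesis by blast
qed

lemma pgd_step_span:
  fixes u m :: "real^'d"
  assumes u: "u \<bullet> u = 1" and m: "m \<bullet> m = 1"
  shows "pgd_step g u (\<alpha> *\<^sub>R u + \<beta> *\<^sub>R m) =
     (1 / sqrt (1 + g\<^sup>2 * \<beta>\<^sup>2 * (1 - (u \<bullet> m)\<^sup>2))) *\<^sub>R ((1 + g * \<beta> * (u \<bullet> m)) *\<^sub>R u - (g * \<beta>) *\<^sub>R m)"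
proof -
  define v where "v = (1 + g * \<beta> * (u \<bullet> m)) *\<^sub>R u - (g * \<beta>) *\<^sub>R m"
  have step: "u - g *\<^sub>R ((\<alpha> *\<^sub>R u + \<beta> *\<^sub>R m) - (u \<bullet> (\<alpha> *\<^sub>R u + \<beta> *\<^sub>R m)) *\<^sub>R u) = v"
    using u by (simp add: v_def inner_add_right algebra_simps)
  have "(norm v)\<^sup>2 = 1 + g\<^sup>2 * \<beta>\<^sup>2 * (1 - (u \<bullet> m)\<^sup>2)"
    unfolding power2_norm_eq_inner v_def
    using u m by (simp add: inner_diff_left inner_diff_right inner_commute algebra_simps power2_eq_square)
  then have "norm v = sqrt (1 + g\<^sup>2 * \<beta>\<^sup>2 * (1 - (u \<bullet> m)\<^sup>2))"
    by (metis norm_ge_zero real_sqrt_abs abs_of_nonneg)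
  then show ?thesis
    unfolding pgd_step_def Let_def step v_def by (simp add: divide_inverse_commute)
qed

lemma
  fixes u m w :: "real^'d" and g \<alpha> \<beta> :: real
  assumes u: "u \<bullet> u = 1" and m: "m \<bullet> m = 1"
  defines "v \<equiv> pgd_step g u (\<alpha> *\<^sub>R u + \<beta> *\<^sub>R m)" and "k \<equiv> u \<bullet> m"
  shows pgd_step_unit: "v \<bullet> v = 1"
    and pgd_step_overlap: "v \<bullet> m = (k - g * \<beta> * (1 - k\<^sup>2)) / sqrt (1 + g\<^sup>2 * \<beta>\<^sup>2 * (1 - k\<^sup>2))"
    and pgd_step_orthogonal: "w \<bullet> u = 0 \<Longrightarrow> w \<bullet> m = 0 \<Longrightarrow> v \<bullet> w = 0"
proof -
  define N where "N = 1 + g\<^sup>2 * \<beta>\<^sup>2 * (1 - k\<^sup>2)"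
  define z where "z = (1 + g * \<beta> * k) *\<^sub>R u - (g * \<beta>) *\<^sub>R m"
  have v: "v = (1 / sqrt N) *\<^sub>R z"
    unfolding v_def pgd_step_span[OF u m] N_def z_def k_def ..
  have "k\<^sup>2 \<le> 1"
    using Cauchy_Schwarz_ineq[of u m] u m by (simp add: k_def power2_eq_square)
  then have "N > 0"
    unfolding N_def by (simp add: add_pos_nonneg)
  moreover have "z \<bullet> z = N"
    using u m by (simp add: z_def N_def k_def inner_diff_left inner_diff_right inner_commute
        algebra_simps power2_eq_square)
  ultimately show "v \<bullet> v = 1"
    unfolding v inner_scaleR_left inner_scaleR_right by (simp add: field_simps)
  show "v \<bullet> m = (k - g * \<beta> * (1 - k\<^sup>2)) / sqrt (1 + g\<^sup>2 * \<beta>\<^sup>2 * (1 - k\<^sup>2))"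
    unfolding v z_def N_def using m
    by (simp add: inner_diff_left k_def algebra_simps power2_eq_square diff_divide_distrib add_divide_distrib)
  show "v \<bullet> w = 0" if "w \<bullet> u = 0" "w \<bullet> m = 0"
    unfolding v z_def using that by (simp add: inner_diff_left inner_diff_right inner_commute)
qed

lemma pgd_iteration_step:
  fixes m0 m1 u0 u1 :: "real^'d" and L :: nat and s lam g :: real
  assumes s: "s > 0" and L: "L \<ge> 1"
    and m0: "m0 \<bullet> m0 = 1" and m1: "m1 \<bullet> m1 = 1" and m0_m1: "m0 \<bullet> m1 = 0"
    and u0: "u0 \<bullet> u0 = 1" and u0_m1: "u0 \<bullet> m1 = 0" and u0_u1: "u0 \<bullet> u1 = 0"
    and u1: "u1 \<bullet> u1 = 1" and u1_m0: "u1 \<bullet> m0 = 0"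
  defines "u0' \<equiv> pgd_step g u0 (grad (\<lambda>u. risk L lam s m0 m1 u u1) u0)"
    and "u1' \<equiv> pgd_step g u1 (grad (\<lambda>u. risk L lam s m0 m1 u0 u) u1)"
  shows "u0' \<bullet> u0' = 1 \<and> u0' \<bullet> m1 = 0 \<and> u0' \<bullet> u1' = 0 \<and> u1' \<bullet> u1' = 1 \<and> u1' \<bullet> m0 = 0 \<and>
         (u0' \<bullet> m0, u1' \<bullet> m1) = phi CARD('d) L lam s g (u0 \<bullet> m0, u1 \<bullet> m1)"
proof -
  define k0 where "k0 = u0 \<bullet> m0"
  define k1 where "k1 = u1 \<bullet> m1"
  define b0 where "b0 = deriv (\<lambda>t. risk_lt CARD('d) L lam s t k1) k0"
  define b1 where "b1 = deriv (\<lambda>t. risk_lt CARD('d) L lam s k0 t) k1"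
  have m1_m0: "m1 \<bullet> m0 = 0" and u1_u0: "u1 \<bullet> u0 = 0"
    using m0_m1 u0_u1 by (simp_all add: inner_commute)
  obtain \<alpha>0 where grad0: "grad (\<lambda>u. risk L lam s m0 m1 u u1) u0 = \<alpha>0 *\<^sub>R u0 + b0 *\<^sub>R m0"
    using grad_risk[OF s L m0 m1 m0_m1 u0 u0_m1 u0_u1 u1 u1_m0] unfolding b0_def k0_def k1_def by blast
  have "(\<lambda>t. risk_lt CARD('d) L lam s t k0) = (\<lambda>t. risk_lt CARD('d) L lam s k0 t)"
    by (rule ext) (rule risk_lt_commute)
  moreover have "(\<lambda>u. risk L lam s m0 m1 u0 u) = (\<lambda>u. risk L lam s m1 m0 u u0)"
    by (simp add: fun_eq_iff risk_swap[of L lam s m0])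
  ultimately obtain \<alpha>1 where grad1: "grad (\<lambda>u. risk L lam s m0 m1 u0 u) u1 = \<alpha>1 *\<^sub>R u1 + b1 *\<^sub>R m1"
    using grad_risk[OF s L m1 m0 m1_m0 u1 u1_m0 u1_u0 u0 u0_m1, of lam]
    unfolding k0_def[symmetric] k1_def[symmetric] b1_def by auto
  have u0': "u0' = pgd_step g u0 (\<alpha>0 *\<^sub>R u0 + b0 *\<^sub>R m0)"
    unfolding u0'_def grad0 ..
  have u1': "u1' = pgd_step g u1 (\<alpha>1 *\<^sub>R u1 + b1 *\<^sub>R m1)"
    unfolding u1'_def grad1 ..
  have u0'_m1: "u0' \<bullet> m1 = 0"
    unfolding u0' using u0_m1 m1_m0 by (intro pgd_step_orthogonal[OF u0 m0]) (simp_all add: inner_commute)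
  have u0'_u1: "u0' \<bullet> u1 = 0"
    unfolding u0' using u1_u0 u1_m0 by (intro pgd_step_orthogonal[OF u0 m0]) simp_all
  have u1'_m0: "u1' \<bullet> m0 = 0"
    unfolding u1' using u1_m0 m0_m1 by (intro pgd_step_orthogonal[OF u1 m1]) (simp_all add: inner_commute)
  have u0'_u1': "u0' \<bullet> u1' = 0"
    using pgd_step_orthogonal[OF u1 m1, of u0' g \<alpha>1 b1] u0'_u1 u0'_m1 by (simp add: u1' inner_commute)
  have "(u0' \<bullet> m0, u1' \<bullet> m1) = phi CARD('d) L lam s g (k0, k1)"
    unfolding u0' u1' pgd_step_overlap[OF u0 m0] pgd_step_overlap[OF u1 m1]
    by (simp add: phi_def Let_def b0_def b1_def k0_def k1_def)
  then show ?thesis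
    using u0'_m1 u0'_u1' u1'_m0 unfolding u0' u1'
    by (simp add: pgd_step_unit u0 u1 m0 m1 k0_def k1_def)
qed

theorem lemma5:
  fixes ms0 ms1 :: "real^'d"
    and L :: nat and s lam g :: real
    and mu0 mu1 :: "nat \<Rightarrow> real^'d"
  assumes d2: "CARD('d) \<ge> 2"
    and L2: "L \<ge> 2"
    and s_pos: "s > 0" and lam_pos: "lam > 0" and g_pos: "g > 0"
    and ms0: "norm ms0 = 1" and ms1: "norm ms1 = 1" and ms_orth: "ms0 \<bullet> ms1 = 0"
    and init: "norm (mu0 0) = 1" "norm (mu1 0) = 1"
      "ms1 \<bullet> mu0 0 = 0" "ms0 \<bullet> mu1 0 = 0" "mu0 0 \<bullet> mu1 0 = 0"
    and iter0: "\<And>k. mu0 (Suc k) =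
        pgd_step g (mu0 k) (grad (\<lambda>u. risk L lam s ms0 ms1 u (mu1 k)) (mu0 k))"
    and iter1: "\<And>k. mu1 (Suc k) =
        pgd_step g (mu1 k) (grad (\<lambda>u. risk L lam s ms0 ms1 (mu0 k) u) (mu1 k))"
  shows "\<forall>k. (mu0 (Suc k) \<bullet> ms0, mu1 (Suc k) \<bullet> ms1) =
           phi (real CARD('d)) (real L) lam s g (mu0 k \<bullet> ms0, mu1 k \<bullet> ms1)"
proof -
  define on_M where "on_M k \<longleftrightarrow> mu0 k \<bullet> mu0 k = 1 \<and> mu0 k \<bullet> ms1 = 0 \<and> mu0 k \<bullet> mu1 k = 0
    \<and> mu1 k \<bullet> mu1 k = 1 \<and> mu1 k \<bullet> ms0 = 0" for k
  have step: "on_M (Suc k) \<and> (mu0 (Suc k) \<bullet> ms0, mu1 (Suc k) \<bullet> ms1) =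
      phi CARD('d) L lam s g (mu0 k \<bullet> ms0, mu1 k \<bullet> ms1)" if "on_M k" for k
    using that pgd_iteration_step[OF s_pos _ _ _ ms_orth, of L "mu0 k" "mu1 k" g lam] L2 ms0 ms1
    unfolding on_M_def iter0 iter1 by (simp add: norm_eq_1)
  have "on_M k" for k
    by (induction k) (use init step in \<open>auto simp: on_M_def norm_eq_1 inner_commute\<close>)
  then show ?thesis
    using step by blast
qed

end
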